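(* Let $F$ be a Banach lattice. The following are equivalent: (i) $F$ is order continuous; (ii) the aw-topology is stronger than the un-topology; (iii) the un-topology is boundedly exhaustive; (iv) the un-topology is uniformly exhaustive.
   Context: un-topology: linear topology with zero neighborhood base $\{f:\||f|\wedge h\|<\varepsilon\}$, $h\in F_+$, $\varepsilon>0$. aw-topology: linear topology with zero neighborhood base $\{f:\nu(|f|)<\varepsilon\}$, $\nu\in F^*_+$, $\varepsilon>0$. A linear topology $\tau$ on $F$ is boundedly exhaustive if every norm-bounded disjoint sequence ($|f_n|\wedge|f_m|=0$ for $n\neq m$) is $\tau$-null; it is uniformly exhaustive if for every $\tau$-neighborhood $U$ of $0$ there is $n\in\mathbb{N}$ such that there is no pairwise disjoint $n$-tuple of elements all lying outside $U$. *)

theory Defs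
  imports "HOL-Analysis.Analysis" "HOL-Library.Lattice_Algebras"
begin

class banach_lattice = banach + ordered_real_vector + lattice_ab_group_add_abs +
  assumes lattice_norm: "\<bar>x\<bar> \<le> \<bar>y\<bar> \<Longrightarrow> norm x \<le> norm y"

text \<open>Order continuity: every net decreasing to 0 converges to 0 in norm.
  A decreasing net is represented by its range, a downward directed set.\<close>
definition downward_directed :: "'a::order set \<Rightarrow> bool" where
  "downward_directed D \<longleftrightarrow> D \<noteq> {} \<and> (\<forall>a\<in>D. \<forall>b\<in>D. \<exists>c\<in>D. c \<le> a \<and> c \<le> b)"

definition order_continuous :: "'a::banach_lattice itself \<Rightarrow> bool" where
  "order_continuous _ \<longleftrightarrow>
     (\<forall>D::'a set. downward_directed D \<and> (\<forall>d\<in>D. 0 \<le> d) \<and>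
        (\<forall>z. (\<forall>d\<in>D. z \<le> d) \<longrightarrow> z \<le> 0)
        \<longrightarrow> (\<forall>\<epsilon>>0. \<exists>d\<in>D. norm d < \<epsilon>))"

definition pos_dual :: "('a::banach_lattice \<Rightarrow> real) set" where
  "pos_dual = {\<nu>. bounded_linear \<nu> \<and> (\<forall>x. 0 \<le> x \<longrightarrow> 0 \<le> \<nu> x)}"

definition un_topology :: "'a::banach_lattice topology" where
  "un_topology = topology (\<lambda>U. \<forall>x\<in>U. \<exists>h \<epsilon>. 0 \<le> h \<and> \<epsilon> > 0 \<and>
      {y. norm (inf \<bar>y - x\<bar> h) < \<epsilon>} \<subseteq> U)"

definition aw_topology :: "'a::banach_lattice topology" where
  "aw_topology = topology (\<lambda>U. \<forall>x\<in>U. \<exists>\<nu> \<epsilon>. \<nu> \<in> pos_dual \<and> \<epsilon> > 0 \<and>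
      {y. \<nu> \<bar>y - x\<bar> < \<epsilon>} \<subseteq> U)"

definition lat_disjoint :: "'a::banach_lattice \<Rightarrow> 'a \<Rightarrow> bool" where
  "lat_disjoint f g \<longleftrightarrow> inf \<bar>f\<bar> \<bar>g\<bar> = 0"

definition boundedly_exhaustive :: "'a::banach_lattice topology \<Rightarrow> bool" where
  "boundedly_exhaustive T \<longleftrightarrow>
     (\<forall>x::nat \<Rightarrow> 'a. (\<exists>M. \<forall>n. norm (x n) \<le> M) \<and>
        (\<forall>n m. n \<noteq> m \<longrightarrow> lat_disjoint (x n) (x m))
        \<longrightarrow> limitin T x 0 sequentially)"

definition uniformly_exhaustive :: "'a::banach_lattice topology \<Rightarrow> bool" where
  "uniformly_exhaustive T \<longleftrightarrow>
     (\<forall>U. (\<exists>V. openin T V \<and> 0 \<in> V \<and> V \<subseteq> U) \<longrightarrow>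
        (\<exists>n::nat. \<not> (\<exists>x::nat \<Rightarrow> 'a.
            (\<forall>i<n. \<forall>j<n. i \<noteq> j \<longrightarrow> lat_disjoint (x i) (x j)) \<and>
            (\<forall>i<n. x i \<notin> U))))"

end

theory Submission
  imports Defs
begin

text \<open>All four conditions are equivalent to the sequential property that disjoint order bounded
  positive sequences are norm null. For bounded exhaustivity this is immediate, because an order
  bounded positive sequence converges to 0 in the un-topology iff it does so in norm. Order
  continuity implies the property via the downward directed set of elements of \<open>[0,h]\<close> that
  eventually dominate the sequence. Conversely the property forces positive sequences with order
  bounded partial sums to be null: for every \<open>\<epsilon>\<close> the excesses \<open>(y\<^sub>n - \<epsilon>h)\<^sup>+\<close> have the
  property that any \<open>K + 1\<close> of them, \<open>K \<ge> 1/\<epsilon>\<close>, meet in 0, and such sequences are null by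
  induction on \<open>K\<close>. Hence monotone order bounded sequences converge, which gives order continuity.

  If the aw-topology is finer, a basic un-neighbourhood \<open>{f. \<parallel>|f| \<sqinter> h\<parallel> < \<epsilon>}\<close> contains some
  \<open>{f. \<nu>|f| < \<delta>}\<close>, and fewer than \<open>\<nu>(h)/\<delta> + 1\<close> disjoint elements can lie outside it; so
  the un-topology is uniformly exhaustive, hence boundedly exhaustive. Finally, the sequential
  property makes the aw-topology finer once for all \<open>h \<ge> 0\<close> and \<open>\<epsilon> > 0\<close> there is a positive
  functional \<open>\<nu>\<close> with \<open>\<parallel>y\<parallel> < \<epsilon>\<close> whenever \<open>0 \<le> y \<le> h\<close> and \<open>\<nu> y = 0\<close>. Such a \<open>\<nu>\<close> is a finite
  sum of Hahn-Banach norming functionals: otherwise these sums produce a sequence \<open>Y\<^sub>k\<close> in \<open>[0,h]\<close>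
  of norm at least \<open>\<epsilon>\<close> whose norming functionals annihilate all later terms, and cutting off the
  tails of \<open>Y\<close> turns it into a disjoint sequence that is not null.\<close>

section \<open>Lattice-ordered groups\<close>

context lattice_ab_group_add
begin

lemma inf_le_inf_add_diff:
  assumes "z \<le> y" shows "inf x y \<le> inf x z + (y - z)"
proof -
  have "inf x y \<le> inf (x + (y - z)) (z + (y - z))"
    using assms by (intro inf_mono) (simp_all add: le_add_same_cancel1 algebra_simps)
  also have "\<dots> = inf x z + (y - z)" by (simp add: add_inf_distrib_right)
  finally show ?thesis .
qed

lemma inf_sup_distrib_group: "inf a (sup b c) = sup (inf a b) (inf a c)"
proof (rule order.antisym)
  let ?u = "sup (inf a b) (inf a c)" and ?s = "sup b c"
  have "inf a ?s \<le> inf a b + (?s - b)" by (rule inf_le_inf_add_diff) simp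
  also have "\<dots> \<le> ?u + (?s - b)" by (rule add_right_mono) simp
  finally have "inf a ?s \<le> ?u + (?s - b)" .
  moreover have "inf a ?s \<le> inf a c + (?s - c)" by (rule inf_le_inf_add_diff) simp
  hence "inf a ?s \<le> ?u + (?s - c)" by (rule order_trans) (rule add_right_mono, simp)
  ultimately have "inf a ?s \<le> inf (?u + (?s - b)) (?u + (?s - c))" by (rule le_infI)
  also have "\<dots> = ?u + (?s + inf (- b) (- c))"
    by (simp only: add_inf_distrib_left diff_conv_add_uminus)
  also have "\<dots> = ?u" by (simp only: neg_sup_eq_inf[symmetric] add.right_inverse add_0_right)
  finally show "inf a ?s \<le> ?u" .
  show "?u \<le> inf a ?s" by (rule le_supI; rule inf_mono; simp)
qed

subclass distrib_lattice
proof
  fix a b c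
  have "sup a (inf b c) = - inf (- a) (- inf b c)" by (rule sup_eq_neg_inf)
  also have "- inf b c = sup (- b) (- c)" by (rule neg_inf_eq_sup)
  also have "inf (- a) (sup (- b) (- c)) = sup (inf (- a) (- b)) (inf (- a) (- c))"
    by (rule inf_sup_distrib_group)
  also have "- \<dots> = inf (- inf (- a) (- b)) (- inf (- a) (- c))" by (rule neg_sup_eq_inf)
  finally show "sup a (inf b c) = inf (sup a b) (sup a c)"
    by (simp only: neg_inf_eq_sup minus_minus)
qed

lemma inf_add_le_add_inf:
  assumes "0 \<le> a" "0 \<le> b" "0 \<le> c"
  shows "inf (a + b) c \<le> inf a c + inf b c"
proof -
  have "inf (a + b) c \<le> inf (inf b c + a) (inf b c + c)"
  proof (rule le_infI)
    have "inf c (a + b) \<le> inf c b + (a + b - b)"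
      by (rule inf_le_inf_add_diff) (simp add: assms(1) add_increasing)
    thus "inf (a + b) c \<le> inf b c + a" by (simp add: inf_commute add.commute)
    have "c \<le> inf b c + c" using assms by (simp add: add_increasing)
    thus "inf (a + b) c \<le> inf b c + c" by (rule le_infI2)
  qed
  also have "\<dots> = inf b c + inf a c" by (rule add_inf_distrib_left[symmetric])
  finally show ?thesis by (simp add: add.commute)
qed

lemma sup_le_add_of_nonneg: "0 \<le> a \<Longrightarrow> 0 \<le> b \<Longrightarrow> sup a b \<le> a + b"
  by (intro le_supI) (simp_all add: add_increasing add_increasing2)

lemma inf_sup_le_add_inf:
  "0 \<le> x \<Longrightarrow> 0 \<le> a \<Longrightarrow> 0 \<le> b \<Longrightarrow> inf x (sup a b) \<le> inf x a + inf x b"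
  by (simp add: inf_sup_distrib1 sup_le_add_of_nonneg)

lemma add_eq_sup_of_inf_zero: "inf a b = 0 \<Longrightarrow> a + b = sup a b"
  using add_eq_inf_sup[of a b] by simp

lemma diff_sup_diff_zero_eq: "v - sup (v - w) 0 = inf w v"
proof -
  have "v - sup (v - w) 0 = inf (v + - (v - w)) (v + - 0)"
    by (simp only: diff_sup_eq_inf add_inf_distrib_left)
  also have "v + - (v - w) = w" by (simp add: algebra_simps)
  finally show ?thesis by simp
qed

lemma inf_add_le_inf_add: "0 \<le> b \<Longrightarrow> inf v (a + b) \<le> inf v a + b"
  using inf_le_inf_add_diff[of a "a + b" v] by simp

lemma inf_excess_eq_excess_inf: "inf (sup (p - e) 0) (sup (q - e) 0) = sup (inf p q - e) 0"
  by (simp only: sup_inf_distrib2[symmetric] diff_conv_add_uminus add_inf_distrib_right)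

end

section \<open>Banach lattices\<close>

lemma norm_abs: fixes x :: "'a::banach_lattice" shows "norm \<bar>x\<bar> = norm x"
  by (intro antisym lattice_norm) simp_all

lemma norm_mono_nonneg: fixes x y :: "'a::banach_lattice"
  assumes "0 \<le> x" "x \<le> y" shows "norm x \<le> norm y"
  using assms by (intro lattice_norm) (simp add: abs_of_nonneg)

lemma norm_le_add_of_le_add: fixes x y z :: "'a::banach_lattice"
  assumes "0 \<le> x" "x \<le> y + z" shows "norm x \<le> norm y + norm z"
  using norm_mono_nonneg[OF assms] norm_triangle_ineq[of y z] by simp

lemma scaleR_sup: fixes x y :: "'a::banach_lattice"
  assumes "0 \<le> c" shows "c *\<^sub>R sup x y = sup (c *\<^sub>R x) (c *\<^sub>R y)"
proof (cases "c = 0")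
  case False
  hence c: "c > 0" and ic: "0 \<le> inverse c" using assms by simp_all
  let ?s = "sup (c *\<^sub>R x) (c *\<^sub>R y)"
  show ?thesis
  proof (rule antisym)
    show "?s \<le> c *\<^sub>R sup x y" using assms by (intro le_supI scaleR_left_mono) simp_all
    have "inverse c *\<^sub>R (c *\<^sub>R x) \<le> inverse c *\<^sub>R ?s" "inverse c *\<^sub>R (c *\<^sub>R y) \<le> inverse c *\<^sub>R ?s"
      using ic by (intro scaleR_left_mono; simp)+
    hence "sup x y \<le> inverse c *\<^sub>R ?s" using c by (intro le_supI) simp_all
    hence "c *\<^sub>R sup x y \<le> c *\<^sub>R (inverse c *\<^sub>R ?s)" using assms by (rule scaleR_left_mono)
    thus "c *\<^sub>R sup x y \<le> ?s" using c by simp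
  qed
qed simp

lemma scaleR_inf: fixes x y :: "'a::banach_lattice"
  assumes "0 \<le> c" shows "c *\<^sub>R inf x y = inf (c *\<^sub>R x) (c *\<^sub>R y)"
  using scaleR_sup[OF assms, of "- x" "- y"]
  by (simp only: inf_eq_neg_sup[of x y] inf_eq_neg_sup[of "c *\<^sub>R x"] scaleR_minus_right)

lemma scaleR_sup_zero: fixes x :: "'a::banach_lattice"
  assumes "0 \<le> c" shows "c *\<^sub>R sup x 0 = sup (c *\<^sub>R x) 0"
  using scaleR_sup[OF assms, of x 0] by simp

lemma le_scaleR_of_one_le: fixes x :: "'a::banach_lattice"
  assumes "0 \<le> x" "1 \<le> c" shows "x \<le> c *\<^sub>R x"
  using scaleR_right_mono[OF assms(2,1)] by simp

lemma inf_scaleR_le: fixes S v :: "'a::banach_lattice"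
  assumes "0 \<le> v" "1 \<le> c" shows "inf v (c *\<^sub>R S) \<le> c *\<^sub>R inf v S"
proof -
  have "inf v (c *\<^sub>R S) \<le> inf (c *\<^sub>R v) (c *\<^sub>R S)"
    using le_scaleR_of_one_le[OF assms] by (intro inf_mono) simp_all
  also have "\<dots> = c *\<^sub>R inf v S" using assms(2) by (simp add: scaleR_inf)
  finally show ?thesis .
qed

lemma nonneg_eq_zero_if_multiples_bounded: fixes w h :: "'a::banach_lattice"
  assumes "0 \<le> w" "\<And>k::nat. real k *\<^sub>R w \<le> h" shows "w = 0"
proof (rule ccontr)
  assume "w \<noteq> 0"
  hence w: "norm w > 0" by simp
  obtain k :: nat where "real k > norm h / norm w" using reals_Archimedean2 by blast
  hence "real k * norm w > norm h" using w by (simp add: field_simps)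
  moreover have "norm (real k *\<^sub>R w) \<le> norm h"
    using assms by (intro norm_mono_nonneg scaleR_nonneg_nonneg) simp_all
  ultimately show False by simp
qed

lemma norm_sup_zero_le: fixes x :: "'a::banach_lattice" shows "norm (sup x 0) \<le> norm x"
  by (intro lattice_norm) (simp add: abs_ge_self)

lemma sup_zero_diff_le_abs: fixes a b :: "'a::banach_lattice"
  shows "sup a 0 - sup b 0 \<le> \<bar>a - b\<bar>"
proof -
  have "a \<le> \<bar>a - b\<bar> + b" using abs_ge_self[of "a - b"] by (simp only: diff_le_eq)
  also have "\<dots> \<le> \<bar>a - b\<bar> + sup b 0" by (rule add_left_mono) simp
  finally have "sup a 0 \<le> \<bar>a - b\<bar> + sup b 0" by (simp add: add_nonneg_nonneg)
  thus ?thesis by (simp only: diff_le_eq)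
qed

lemma abs_sup_zero_diff_le: fixes a b :: "'a::banach_lattice"
  shows "\<bar>sup a 0 - sup b 0\<bar> \<le> \<bar>a - b\<bar>"
proof -
  have "sup b 0 - sup a 0 \<le> \<bar>b - a\<bar>" by (rule sup_zero_diff_le_abs)
  hence "- (sup a 0 - sup b 0) \<le> \<bar>a - b\<bar>" by (metis minus_diff_eq abs_minus_commute)
  with sup_zero_diff_le_abs[of a b] show ?thesis by (simp only: abs_lattice) (rule le_supI)
qed

lemma tendsto_sup_zero: fixes f :: "nat \<Rightarrow> 'a::banach_lattice"
  assumes "f \<longlonglongrightarrow> L" shows "(\<lambda>n. sup (f n) 0) \<longlonglongrightarrow> sup L 0"
proof -
  have "(\<lambda>n. sup (f n) 0 - sup L 0) \<longlonglongrightarrow> 0"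
  proof (rule Lim_null_comparison)
    have "norm (sup (f n) 0 - sup L 0) \<le> norm (f n - L)" for n
      using lattice_norm[OF abs_sup_zero_diff_le[of "f n" L]] by (simp only: abs_idempotent norm_abs)
    thus "eventually (\<lambda>n. norm (sup (f n) 0 - sup L 0) \<le> norm (f n - L)) sequentially"
      by (intro always_eventually allI)
    show "(\<lambda>n. norm (f n - L)) \<longlonglongrightarrow> 0" using assms by (simp add: tendsto_norm_zero_iff LIM_zero_iff)
  qed
  thus ?thesis by (rule LIM_zero_cancel)
qed

lemma LIMSEQ_ge_of_eventually_ge: fixes f :: "nat \<Rightarrow> 'a::banach_lattice"
  assumes "f \<longlonglongrightarrow> L" "eventually (\<lambda>n. a \<le> f n) sequentially" shows "a \<le> L"
proof -
  have "(\<lambda>n. sup (a - f n) 0) \<longlonglongrightarrow> sup (a - L) 0"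
    using assms(1) by (intro tendsto_sup_zero tendsto_diff) simp_all
  moreover have "eventually (\<lambda>n. 0 = sup (a - f n) 0) sequentially"
    using assms(2) by (rule eventually_mono) (simp add: sup_absorb2)
  hence "(\<lambda>n. sup (a - f n) 0) \<longlonglongrightarrow> 0" by (rule Lim_transform_eventually[OF tendsto_const])
  ultimately have "sup (a - L) 0 = 0" by (rule LIMSEQ_unique)
  hence "a - L \<le> 0" by (metis sup_ge1)
  thus ?thesis by simp
qed

lemma LIMSEQ_le_of_eventually_le: fixes f :: "nat \<Rightarrow> 'a::banach_lattice"
  assumes "f \<longlonglongrightarrow> L" "eventually (\<lambda>n. f n \<le> b) sequentially" shows "L \<le> b"
proof -
  have "eventually (\<lambda>n. - b \<le> - f n) sequentially" using assms(2) by (rule eventually_mono) simp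
  hence "- b \<le> - L" using tendsto_minus[OF assms(1)] by (intro LIMSEQ_ge_of_eventually_ge)
  thus ?thesis by simp
qed

lemma LIMSEQ_le_LIMSEQ: fixes f g :: "nat \<Rightarrow> 'a::banach_lattice"
  assumes "f \<longlonglongrightarrow> a" "g \<longlonglongrightarrow> b" "\<And>n. f n \<le> g n" shows "a \<le> b"
proof -
  have "(\<lambda>n. g n - f n) \<longlonglongrightarrow> b - a" using assms by (intro tendsto_diff)
  moreover have "eventually (\<lambda>n. 0 \<le> g n - f n) sequentially" using assms(3) by simp
  ultimately have "0 \<le> b - a" by (rule LIMSEQ_ge_of_eventually_ge)
  thus ?thesis by simp
qed

lemma LIMSEQ_0_iff_eventually_norm_less: fixes u :: "nat \<Rightarrow> 'a::real_normed_vector"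
  shows "u \<longlonglongrightarrow> 0 \<longleftrightarrow> (\<forall>\<epsilon>>0. eventually (\<lambda>n. norm (u n) < \<epsilon>) sequentially)"
  by (simp add: tendsto_iff dist_norm)

lemma LIMSEQ_0_eventually_norm_less: fixes u :: "nat \<Rightarrow> 'a::real_normed_vector"
  shows "u \<longlonglongrightarrow> 0 \<Longrightarrow> \<epsilon> > 0 \<Longrightarrow> eventually (\<lambda>n. norm (u n) < \<epsilon>) sequentially"
  by (simp add: LIMSEQ_0_iff_eventually_norm_less)

lemma not_LIMSEQ_0_frequently_norm_ge: fixes v :: "nat \<Rightarrow> 'a::real_normed_vector"
  assumes "\<not> v \<longlonglongrightarrow> 0"
  obtains \<eta> where "\<eta> > 0" "\<And>N. \<exists>m\<ge>N. \<eta> \<le> norm (v m)"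
proof -
  obtain \<eta> where \<eta>: "\<eta> > 0" and "\<not> eventually (\<lambda>n. norm (v n) < \<eta>) sequentially"
    using assms unfolding LIMSEQ_0_iff_eventually_norm_less by blast
  hence "\<exists>m\<ge>N. \<eta> \<le> norm (v m)" for N
    unfolding eventually_sequentially by (meson not_less)
  with \<eta> show ?thesis by (rule that)
qed

section \<open>Positive functionals\<close>

lemma pos_dualD:
  assumes "\<nu> \<in> pos_dual"
  shows pos_dual_bounded_linear: "bounded_linear \<nu>"
    and pos_dual_linear: "linear \<nu>"
    and pos_dual_nonneg: "0 \<le> x \<Longrightarrow> 0 \<le> \<nu> x"
  using assms by (auto simp: pos_dual_def bounded_linear.linear)

lemma pos_dual_mono: fixes x y :: "'a::banach_lattice"
  assumes "\<nu> \<in> pos_dual" "x \<le> y" shows "\<nu> x \<le> \<nu> y"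
  using pos_dual_nonneg[OF assms(1), of "y - x"] assms(2)
  by (simp add: linear_diff[OF pos_dual_linear[OF assms(1)]])

lemma pos_dual_zero: "(\<lambda>_. 0) \<in> pos_dual"
  by (simp add: pos_dual_def bounded_linear_zero)

lemma pos_dual_add: "\<nu> \<in> pos_dual \<Longrightarrow> \<mu> \<in> pos_dual \<Longrightarrow> (\<lambda>x. \<nu> x + \<mu> x) \<in> pos_dual"
  unfolding pos_dual_def by (auto intro: bounded_linear_add)

lemma pos_dual_sup_le: fixes a b :: "'a::banach_lattice"
  assumes "\<nu> \<in> pos_dual" "0 \<le> a" "0 \<le> b" shows "\<nu> (sup a b) \<le> \<nu> a + \<nu> b"
  using pos_dual_mono[OF assms(1) sup_le_add_of_nonneg[OF assms(2,3)]]
  by (simp add: linear_add[OF pos_dual_linear[OF assms(1)]])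

section \<open>The un- and aw-topologies\<close>

definition un_open :: "'a::banach_lattice set \<Rightarrow> bool" where
  "un_open U \<longleftrightarrow> (\<forall>x\<in>U. \<exists>h \<epsilon>. 0 \<le> h \<and> \<epsilon> > 0 \<and> {y. norm (inf \<bar>y - x\<bar> h) < \<epsilon>} \<subseteq> U)"

definition aw_open :: "'a::banach_lattice set \<Rightarrow> bool" where
  "aw_open U \<longleftrightarrow> (\<forall>x\<in>U. \<exists>\<nu> \<epsilon>. \<nu> \<in> pos_dual \<and> \<epsilon> > 0 \<and> {y. \<nu> \<bar>y - x\<bar> < \<epsilon>} \<subseteq> U)"

lemma istopology_un_open: "istopology (un_open :: 'a::banach_lattice set \<Rightarrow> bool)"
  unfolding istopology_def
proof (intro conjI allI impI)
  fix S T :: "'a set" assume S: "un_open S" and T: "un_open T"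
  show "un_open (S \<inter> T)" unfolding un_open_def
  proof
    fix x assume "x \<in> S \<inter> T"
    then obtain h1 e1 h2 e2 where h1: "0 \<le> h1" "e1 > 0" "{y. norm (inf \<bar>y - x\<bar> h1) < e1} \<subseteq> S"
      and h2: "0 \<le> h2" "e2 > 0" "{y. norm (inf \<bar>y - x\<bar> h2) < e2} \<subseteq> T"
      using S T unfolding un_open_def by blast
    have "norm (inf \<bar>y - x\<bar> h1) \<le> norm (inf \<bar>y - x\<bar> (sup h1 h2))"
      and "norm (inf \<bar>y - x\<bar> h2) \<le> norm (inf \<bar>y - x\<bar> (sup h1 h2))" for y
      using h1(1) h2(1) by (intro norm_mono_nonneg inf_mono; simp add: le_supI1)+
    hence "{y. norm (inf \<bar>y - x\<bar> (sup h1 h2)) < min e1 e2} \<subseteq> S \<inter> T"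
      using h1(3) h2(3) by (smt (verit) Int_iff mem_Collect_eq subset_iff)
    moreover have "0 \<le> sup h1 h2" using h1(1) by (simp add: le_supI1)
    ultimately show "\<exists>h \<epsilon>. 0 \<le> h \<and> \<epsilon> > 0 \<and> {y. norm (inf \<bar>y - x\<bar> h) < \<epsilon>} \<subseteq> S \<inter> T"
      using h1(2) h2(2) by (intro exI[of _ "sup h1 h2"] exI[of _ "min e1 e2"]) simp
  qed
next
  fix K :: "'a set set" assume "\<forall>S\<in>K. un_open S"
  thus "un_open (\<Union>K)" unfolding un_open_def by (meson Union_upper subset_trans UnionE)
qed

lemma istopology_aw_open: "istopology (aw_open :: 'a::banach_lattice set \<Rightarrow> bool)"
  unfolding istopology_def
proof (intro conjI allI impI)
  fix S T :: "'a set" assume S: "aw_open S" and T: "aw_open T"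
  show "aw_open (S \<inter> T)" unfolding aw_open_def
  proof
    fix x assume "x \<in> S \<inter> T"
    then obtain \<nu> e1 \<mu> e2 where \<nu>: "\<nu> \<in> pos_dual" "e1 > 0" "{y. \<nu> \<bar>y - x\<bar> < e1} \<subseteq> S"
      and \<mu>: "\<mu> \<in> pos_dual" "e2 > 0" "{y. \<mu> \<bar>y - x\<bar> < e2} \<subseteq> T"
      using S T unfolding aw_open_def by blast
    have "0 \<le> \<nu> \<bar>y - x\<bar>" "0 \<le> \<mu> \<bar>y - x\<bar>" for y using \<nu>(1) \<mu>(1) by (simp_all add: pos_dual_nonneg)
    hence "{y. \<nu> \<bar>y - x\<bar> + \<mu> \<bar>y - x\<bar> < min e1 e2} \<subseteq> S \<inter> T"
      using \<nu>(3) \<mu>(3) by (smt (verit) Collect_mono_iff Int_iff subset_iff)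
    thus "\<exists>\<nu> \<epsilon>. \<nu> \<in> pos_dual \<and> \<epsilon> > 0 \<and> {y. \<nu> \<bar>y - x\<bar> < \<epsilon>} \<subseteq> S \<inter> T"
      using \<nu>(2) \<mu>(2) pos_dual_add[OF \<nu>(1) \<mu>(1)]
      by (intro exI[of _ "\<lambda>z. \<nu> z + \<mu> z"] exI[of _ "min e1 e2"]) simp
  qed
next
  fix K :: "'a set set" assume "\<forall>S\<in>K. aw_open S"
  thus "aw_open (\<Union>K)" unfolding aw_open_def by (meson Union_upper subset_trans UnionE)
qed

lemma openin_un_topology: "openin un_topology U \<longleftrightarrow> un_open U"
  unfolding un_topology_def un_open_def[symmetric] topology_inverse'[OF istopology_un_open] ..

lemma openin_aw_topology: "openin aw_topology U \<longleftrightarrow> aw_open U"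
  unfolding aw_topology_def aw_open_def[symmetric] topology_inverse'[OF istopology_aw_open] ..

lemma openin_un_ball: fixes h :: "'a::banach_lattice"
  assumes h: "0 \<le> h" and "\<epsilon> > 0"
  shows "openin un_topology {y. norm (inf \<bar>y\<bar> h) < \<epsilon>}"
  unfolding openin_un_topology un_open_def
proof
  fix x assume "x \<in> {y. norm (inf \<bar>y\<bar> h) < \<epsilon>}"
  hence x: "norm (inf \<bar>x\<bar> h) < \<epsilon>" by simp
  let ?r = "\<epsilon> - norm (inf \<bar>x\<bar> h)"
  have "norm (inf \<bar>y\<bar> h) \<le> norm (inf \<bar>y - x\<bar> h) + norm (inf \<bar>x\<bar> h)" for y
  proof -
    have "inf \<bar>y\<bar> h \<le> inf (\<bar>y - x\<bar> + \<bar>x\<bar>) h"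
      using abs_triangle_ineq[of "y - x" x] by (intro inf_mono) simp_all
    also have "\<dots> \<le> inf \<bar>y - x\<bar> h + inf \<bar>x\<bar> h" using h by (intro inf_add_le_add_inf) simp_all
    finally show ?thesis using h by (intro norm_le_add_of_le_add) simp_all
  qed
  hence "{y. norm (inf \<bar>y - x\<bar> h) < ?r} \<subseteq> {y. norm (inf \<bar>y\<bar> h) < \<epsilon>}"
    by (smt (verit) mem_Collect_eq subsetI)
  thus "\<exists>h' \<epsilon>'. 0 \<le> h' \<and> \<epsilon>' > 0 \<and> {y. norm (inf \<bar>y - x\<bar> h') < \<epsilon>'} \<subseteq> {y. norm (inf \<bar>y\<bar> h) < \<epsilon>}"
    using h x by (intro exI[of _ h] exI[of _ ?r]) simp
qed

lemma un_neighbourhood_0_contains_ball: fixes U :: "'a::banach_lattice set"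
  assumes "openin un_topology U" "0 \<in> U"
  obtains h \<epsilon> where "0 \<le> h" "\<epsilon> > 0" "{y. norm (inf \<bar>y\<bar> h) < \<epsilon>} \<subseteq> U"
  using assms unfolding openin_un_topology un_open_def by fastforce

lemma topspace_un_topology: "topspace un_topology = UNIV"
proof -
  have "un_open UNIV" unfolding un_open_def by (intro ballI exI[of _ 0] exI[of _ 1]) simp
  thus ?thesis using openin_subset[of un_topology UNIV] by (auto simp: openin_un_topology)
qed

lemma limitin_un_topology_0_iff: fixes x :: "nat \<Rightarrow> 'a::banach_lattice"
  shows "limitin un_topology x 0 sequentially \<longleftrightarrow>
    (\<forall>h \<epsilon>. 0 \<le> h \<longrightarrow> \<epsilon> > 0 \<longrightarrow> eventually (\<lambda>n. norm (inf \<bar>x n\<bar> h) < \<epsilon>) sequentially)"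
proof
  assume L: "limitin un_topology x 0 sequentially"
  show "\<forall>h \<epsilon>. 0 \<le> h \<longrightarrow> \<epsilon> > 0 \<longrightarrow> eventually (\<lambda>n. norm (inf \<bar>x n\<bar> h) < \<epsilon>) sequentially"
  proof (intro allI impI)
    fix h :: 'a and \<epsilon> :: real assume "0 \<le> h" "\<epsilon> > 0"
    hence "openin un_topology {y. norm (inf \<bar>y\<bar> h) < \<epsilon>} \<and> 0 \<in> {y. norm (inf \<bar>y\<bar> h) < \<epsilon>}"
      using openin_un_ball by (simp add: inf_absorb1)
    hence "eventually (\<lambda>n. x n \<in> {y. norm (inf \<bar>y\<bar> h) < \<epsilon>}) sequentially"
      using L unfolding limitin_def by blast
    thus "eventually (\<lambda>n. norm (inf \<bar>x n\<bar> h) < \<epsilon>) sequentially" by simp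
  qed
next
  assume R: "\<forall>h \<epsilon>. 0 \<le> h \<longrightarrow> \<epsilon> > 0 \<longrightarrow> eventually (\<lambda>n. norm (inf \<bar>x n\<bar> h) < \<epsilon>) sequentially"
  show "limitin un_topology x 0 sequentially" unfolding limitin_def topspace_un_topology
  proof (intro conjI allI impI UNIV_I)
    fix U :: "'a set" assume "openin un_topology U \<and> 0 \<in> U"
    then obtain h \<epsilon> where "0 \<le> h" "\<epsilon> > 0" and sub: "{y. norm (inf \<bar>y\<bar> h) < \<epsilon>} \<subseteq> U"
      using un_neighbourhood_0_contains_ball by blast
    hence "eventually (\<lambda>n. norm (inf \<bar>x n\<bar> h) < \<epsilon>) sequentially" using R by blast
    thus "eventually (\<lambda>n. x n \<in> U) sequentially" by (rule eventually_mono) (use sub in blast)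
  qed
qed

section \<open>Disjoint order bounded sequences\<close>

definition disjoint_order_bounded_null :: "'a::banach_lattice itself \<Rightarrow> bool" where
  "disjoint_order_bounded_null _ \<longleftrightarrow>
     (\<forall>(x::nat \<Rightarrow> 'a) h. (\<forall>n. 0 \<le> x n \<and> x n \<le> h) \<and> (\<forall>n m. n \<noteq> m \<longrightarrow> inf (x n) (x m) = 0)
        \<longrightarrow> x \<longlonglongrightarrow> 0)"

lemma disjoint_order_bounded_nullD: fixes x :: "nat \<Rightarrow> 'a::banach_lattice"
  assumes "disjoint_order_bounded_null TYPE('a)" "\<And>n. 0 \<le> x n" "\<And>n. x n \<le> h"
    "\<And>n m. n \<noteq> m \<Longrightarrow> inf (x n) (x m) = 0"
  shows "x \<longlonglongrightarrow> 0"
  using assms unfolding disjoint_order_bounded_null_def by blast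

lemma disjoint_order_bounded_nullD': fixes x :: "nat \<Rightarrow> 'a::banach_lattice"
  assumes "disjoint_order_bounded_null TYPE('a)" "\<And>n. 0 \<le> x n" "\<And>n. x n \<le> h"
    "\<And>n m. n < m \<Longrightarrow> inf (x n) (x m) = 0"
  shows "x \<longlonglongrightarrow> 0"
proof (rule disjoint_order_bounded_nullD[OF assms(1-3)])
  fix n m :: nat assume "n \<noteq> m"
  thus "inf (x n) (x m) = 0"
    using assms(4)[of n m] assms(4)[of m n] by (cases "n < m") (simp_all add: inf_commute)
qed

lemma inf_abs_disjoint: fixes x y :: "'a::banach_lattice"
  assumes "lat_disjoint x y" "0 \<le> h" shows "inf (inf \<bar>x\<bar> h) (inf \<bar>y\<bar> h) = 0"
proof (rule antisym)
  have "inf (inf \<bar>x\<bar> h) (inf \<bar>y\<bar> h) \<le> inf \<bar>x\<bar> \<bar>y\<bar>" by (intro inf_mono) simp_all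
  thus "inf (inf \<bar>x\<bar> h) (inf \<bar>y\<bar> h) \<le> 0" using assms(1) unfolding lat_disjoint_def by simp
qed (use assms(2) in simp)

lemma inf_sum_le_sum_inf: fixes f :: "nat \<Rightarrow> 'a::banach_lattice"
  assumes "\<And>i. i < n \<Longrightarrow> 0 \<le> f i" "0 \<le> g"
  shows "inf (\<Sum>i<n. f i) g \<le> (\<Sum>i<n. inf (f i) g)"
  using assms
proof (induction n)
  case (Suc n)
  have p: "0 \<le> (\<Sum>i<n. f i)" using Suc.prems by (intro sum_nonneg) simp
  have "inf (\<Sum>i<Suc n. f i) g = inf ((\<Sum>i<n. f i) + f n) g" by simp
  also have "\<dots> \<le> inf (\<Sum>i<n. f i) g + inf (f n) g"
    using Suc.prems p by (intro inf_add_le_add_inf) simp_all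
  also have "\<dots> \<le> (\<Sum>i<n. inf (f i) g) + inf (f n) g" using Suc by (intro add_right_mono) simp
  finally show ?case by simp
qed (simp add: inf_absorb1)

lemma sum_disjoint_le: fixes f :: "nat \<Rightarrow> 'a::banach_lattice"
  assumes "0 \<le> h" "\<And>i. i < n \<Longrightarrow> 0 \<le> f i" "\<And>i. i < n \<Longrightarrow> f i \<le> h"
    "\<And>i j. i < n \<Longrightarrow> j < n \<Longrightarrow> i \<noteq> j \<Longrightarrow> inf (f i) (f j) = 0"
  shows "(\<Sum>i<n. f i) \<le> h"
  using assms
proof (induction n)
  case (Suc n)
  have s0: "0 \<le> (\<Sum>i<n. f i)" using Suc.prems(2) by (intro sum_nonneg) simp
  have "inf (\<Sum>i<n. f i) (f n) \<le> (\<Sum>i<n. inf (f i) (f n))"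
    using Suc.prems by (intro inf_sum_le_sum_inf) simp_all
  also have "\<dots> = 0" using Suc.prems(4) by (intro sum.neutral) simp
  finally have "inf (\<Sum>i<n. f i) (f n) = 0" using s0 Suc.prems(2)[of n] by (intro antisym) simp_all
  hence "(\<Sum>i<Suc n. f i) = sup (\<Sum>i<n. f i) (f n)" by (simp add: add_eq_sup_of_inf_zero)
  also have "\<dots> \<le> h" using Suc by simp
  finally show ?case .
qed simp

text \<open>A lower bound \<open>w \<ge> 0\<close> of the eventual upper bounds of a disjoint sequence is also a lower
  bound of \<open>y - w\<close> for every eventual upper bound \<open>y\<close>, as \<open>y - x\<^sub>m\<close> is again one. Hence
  \<open>k w \<le> y\<close> for all \<open>k\<close>.\<close>

lemma eventual_upper_bounds_inf_zero: fixes x :: "nat \<Rightarrow> 'a::banach_lattice"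
  assumes x0: "\<And>n. 0 \<le> x n" and xh: "\<And>n. x n \<le> h"
    and dj: "\<And>n m. n \<noteq> m \<Longrightarrow> inf (x n) (x m) = 0"
    and z: "\<forall>d\<in>{y. 0 \<le> y \<and> y \<le> h \<and> (\<exists>n. \<forall>k\<ge>n. x k \<le> y)}. z \<le> d"
  shows "z \<le> 0"
proof -
  define D where "D = {y. 0 \<le> y \<and> y \<le> h \<and> (\<exists>n. \<forall>k\<ge>n. x k \<le> y)}"
  have h0: "0 \<le> h" using x0[of 0] xh[of 0] by (rule order_trans)
  have hD: "h \<in> D" unfolding D_def using h0 xh by auto
  have step: "y - w \<in> D" if y: "y \<in> D" and w0: "0 \<le> w" and wl: "\<forall>d\<in>D. w \<le> d" for y w
  proof -
    obtain N where y0: "0 \<le> y" and yh: "y \<le> h" and yN: "\<forall>k\<ge>N. x k \<le> y" using y unfolding D_def by blast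
    have "x m \<le> y - w" if m: "m \<ge> N" for m
    proof -
      have "y - x m \<in> D" unfolding D_def
      proof (intro CollectI conjI exI[of _ "Suc m + N"] allI impI)
        show "0 \<le> y - x m" using yN m by simp
        show "y - x m \<le> h" using yh x0[of m] by (simp add: diff_le_eq add_increasing2 order_trans[OF yh])
        fix k assume k: "Suc m + N \<le> k"
        hence "x k + x m = sup (x k) (x m)" using dj by (simp add: add_eq_sup_of_inf_zero)
        also have "\<dots> \<le> y" using yN k m by simp
        finally show "x k \<le> y - x m" by (simp add: le_diff_eq)
      qed
      hence "w \<le> y - x m" using wl by blast
      thus ?thesis by (simp add: le_diff_eq add.commute)
    qed
    moreover have "0 \<le> y - w" "y - w \<le> h" using wl y yh w0 by (simp_all add: diff_le_eq add_increasing2 order_trans[OF yh])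
    ultimately show ?thesis unfolding D_def by blast
  qed
  define w where "w = sup z 0"
  have w0: "0 \<le> w" and wl: "\<forall>d\<in>D. w \<le> d" using z unfolding w_def D_def by auto
  have "\<forall>y\<in>D. real k *\<^sub>R w \<le> y" for k :: nat
  proof (induction k)
    case (Suc k)
    show ?case
    proof
      fix y assume "y \<in> D"
      hence "real k *\<^sub>R w \<le> y - w" using Suc step[OF _ w0 wl] by blast
      thus "real (Suc k) *\<^sub>R w \<le> y" by (simp add: scaleR_add_left le_diff_eq add.commute)
    qed
  qed (simp add: D_def)
  hence "w = 0" using w0 hD by (intro nonneg_eq_zero_if_multiples_bounded) blast+
  thus ?thesis unfolding w_def by (metis sup_ge1)
qed

lemma disjoint_null_if_order_continuous:
  assumes OC: "order_continuous TYPE('a::banach_lattice)"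
  shows "disjoint_order_bounded_null TYPE('a)"
  unfolding disjoint_order_bounded_null_def
proof (intro allI impI)
  fix x :: "nat \<Rightarrow> 'a" and h
  assume x: "(\<forall>n. 0 \<le> x n \<and> x n \<le> h) \<and> (\<forall>n m. n \<noteq> m \<longrightarrow> inf (x n) (x m) = 0)"
  hence x0: "0 \<le> x n" and xh: "x n \<le> h" and dj: "n \<noteq> m \<Longrightarrow> inf (x n) (x m) = 0" for n m
    by auto
  define D where "D = {y. 0 \<le> y \<and> y \<le> h \<and> (\<exists>n. \<forall>k\<ge>n. x k \<le> y)}"
  have hD: "h \<in> D" unfolding D_def using x0[of 0] xh by (auto intro: order_trans)
  have infD: "inf a b \<in> D" if ab: "a \<in> D" "b \<in> D" for a b
  proof -
    obtain na nb where "0 \<le> a" "a \<le> h" "\<forall>k\<ge>na. x k \<le> a" "0 \<le> b" "\<forall>k\<ge>nb. x k \<le> b"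
      using ab unfolding D_def by blast
    hence "0 \<le> inf a b" "inf a b \<le> h" "\<forall>k\<ge>max na nb. x k \<le> inf a b" by (simp_all add: le_infI1)
    thus ?thesis unfolding D_def by blast
  qed
  have "downward_directed D" unfolding downward_directed_def
  proof (intro conjI ballI)
    show "D \<noteq> {}" using hD by blast
    fix a b assume "a \<in> D" "b \<in> D"
    thus "\<exists>c\<in>D. c \<le> a \<and> c \<le> b" by (intro bexI[of _ "inf a b"] infD) simp_all
  qed
  moreover have "\<forall>d\<in>D. 0 \<le> d" unfolding D_def by blast
  moreover have "\<forall>z. (\<forall>d\<in>D. z \<le> d) \<longrightarrow> z \<le> 0"
  proof (intro allI impI)
    fix z assume "\<forall>d\<in>D. z \<le> d"
    thus "z \<le> 0" using x0 xh dj unfolding D_def by (rule eventual_upper_bounds_inf_zero[rotated 3])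
  qed
  ultimately have small: "\<forall>\<epsilon>>0. \<exists>d\<in>D. norm d < \<epsilon>" using OC unfolding order_continuous_def by blast
  show "x \<longlonglongrightarrow> 0" unfolding LIMSEQ_0_iff_eventually_norm_less
  proof (intro allI impI)
    fix \<epsilon> :: real assume "\<epsilon> > 0"
    then obtain d where "d \<in> D" "norm d < \<epsilon>" using small by blast
    then obtain N where "\<forall>k\<ge>N. x k \<le> d" unfolding D_def by blast
    hence "\<forall>k\<ge>N. norm (x k) < \<epsilon>" using x0 \<open>norm d < \<epsilon>\<close> norm_mono_nonneg by (meson le_less_trans)
    thus "eventually (\<lambda>n. norm (x n) < \<epsilon>) sequentially" unfolding eventually_sequentially by blast
  qed
qed

lemma boundedly_exhaustive_if_disjoint_null:
  assumes "disjoint_order_bounded_null TYPE('a::banach_lattice)"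
  shows "boundedly_exhaustive (un_topology :: 'a topology)"
  unfolding boundedly_exhaustive_def limitin_un_topology_0_iff
proof (intro allI impI)
  fix x :: "nat \<Rightarrow> 'a" and h :: 'a and \<epsilon> :: real
  assume a: "(\<exists>M. \<forall>n. norm (x n) \<le> M) \<and> (\<forall>n m. n \<noteq> m \<longrightarrow> lat_disjoint (x n) (x m))"
    and h: "0 \<le> h" and e: "\<epsilon> > 0"
  have "(\<lambda>n. inf \<bar>x n\<bar> h) \<longlonglongrightarrow> 0"
  proof (rule disjoint_order_bounded_nullD[OF assms, where h = h])
    show "inf (inf \<bar>x n\<bar> h) (inf \<bar>x m\<bar> h) = 0" if "n \<noteq> m" for n m
      using a that h unfolding lat_disjoint_def by (intro inf_abs_disjoint) (auto simp: lat_disjoint_def)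
  qed (use h in simp_all)
  thus "eventually (\<lambda>n. norm (inf \<bar>x n\<bar> h) < \<epsilon>) sequentially"
    using e by (rule LIMSEQ_0_eventually_norm_less)
qed

lemma disjoint_null_if_boundedly_exhaustive:
  assumes "boundedly_exhaustive (un_topology :: ('a::banach_lattice) topology)"
  shows "disjoint_order_bounded_null TYPE('a)"
  unfolding disjoint_order_bounded_null_def
proof (intro allI impI)
  fix x :: "nat \<Rightarrow> 'a" and h
  assume a: "(\<forall>n. 0 \<le> x n \<and> x n \<le> h) \<and> (\<forall>n m. n \<noteq> m \<longrightarrow> inf (x n) (x m) = 0)"
  have h: "0 \<le> h" using a order_trans by blast
  have "\<forall>n. norm (x n) \<le> norm h" using a by (intro allI norm_mono_nonneg) simp_all
  moreover have "\<forall>n m. n \<noteq> m \<longrightarrow> lat_disjoint (x n) (x m)"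
    using a unfolding lat_disjoint_def by (simp add: abs_of_nonneg)
  ultimately have "limitin un_topology x 0 sequentially"
    using assms unfolding boundedly_exhaustive_def by blast
  hence "eventually (\<lambda>n. norm (inf \<bar>x n\<bar> h) < \<epsilon>) sequentially" if "\<epsilon> > 0" for \<epsilon>
    using h that unfolding limitin_un_topology_0_iff by blast
  moreover have "inf \<bar>x n\<bar> h = x n" for n using a by (simp add: abs_of_nonneg inf_absorb1)
  ultimately show "x \<longlonglongrightarrow> 0" unfolding LIMSEQ_0_iff_eventually_norm_less by simp
qed

lemma boundedly_exhaustive_if_uniformly_exhaustive:
  assumes "uniformly_exhaustive (un_topology :: ('a::banach_lattice) topology)"
  shows "boundedly_exhaustive (un_topology :: 'a topology)"
  unfolding boundedly_exhaustive_def
proof (intro allI impI)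
  fix x :: "nat \<Rightarrow> 'a" assume a: "(\<exists>M. \<forall>n. norm (x n) \<le> M) \<and> (\<forall>n m. n \<noteq> m \<longrightarrow> lat_disjoint (x n) (x m))"
  show "limitin un_topology x 0 sequentially" unfolding limitin_def topspace_un_topology
  proof (intro conjI allI impI UNIV_I)
    fix U :: "'a set" assume U: "openin un_topology U \<and> 0 \<in> U"
    then obtain n0 where n0: "\<not> (\<exists>y::nat \<Rightarrow> 'a. (\<forall>i<n0. \<forall>j<n0. i \<noteq> j \<longrightarrow> lat_disjoint (y i) (y j)) \<and> (\<forall>i<n0. y i \<notin> U))"
      using assms unfolding uniformly_exhaustive_def by blast
    show "eventually (\<lambda>n. x n \<in> U) sequentially"
    proof (rule ccontr)
      assume ne: "\<not> eventually (\<lambda>n. x n \<in> U) sequentially"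
      let ?S = "{n. x n \<notin> U}"
      have inf: "infinite ?S"
      proof
        assume "finite ?S"
        then obtain N where "\<forall>n\<in>?S. n < N" using finite_nat_bounded by blast
        hence "eventually (\<lambda>n. x n \<in> U) sequentially" unfolding eventually_sequentially
          by (intro exI[of _ N]) (auto simp: not_less[symmetric])
        thus False using ne by simp
      qed
      let ?y = "\<lambda>i. x (enumerate ?S i)"
      have "(\<forall>i<n0. \<forall>j<n0. i \<noteq> j \<longrightarrow> lat_disjoint (?y i) (?y j)) \<and> (\<forall>i<n0. ?y i \<notin> U)"
      proof (intro conjI allI impI)
        fix i j :: nat assume "i \<noteq> j"
        hence "enumerate ?S i \<noteq> enumerate ?S j" using strict_mono_enumerate[OF inf] strict_mono_eq by blast
        thus "lat_disjoint (?y i) (?y j)" using a by (elim conjE) (erule allE, erule allE, erule impE)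
      next
        fix i :: nat show "?y i \<notin> U" using enumerate_in_set[OF inf, of i] by simp
      qed
      hence "\<exists>y::nat \<Rightarrow> 'a. (\<forall>i<n0. \<forall>j<n0. i \<noteq> j \<longrightarrow> lat_disjoint (y i) (y j)) \<and> (\<forall>i<n0. y i \<notin> U)"
        by (rule exI[of _ ?y])
      thus False using n0 by (rule notE[rotated])
    qed
  qed
qed

lemma uniformly_exhaustive_if_aw_finer:
  assumes AW: "\<forall>U. openin (un_topology :: ('a::banach_lattice) topology) U \<longrightarrow> openin (aw_topology :: 'a topology) U"
  shows "uniformly_exhaustive (un_topology :: 'a topology)"
  unfolding uniformly_exhaustive_def
proof (intro allI impI)
  fix U :: "'a set" assume "\<exists>V. openin un_topology V \<and> 0 \<in> V \<and> V \<subseteq> U"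
  then obtain V where V: "openin un_topology V" "0 \<in> V" "V \<subseteq> U" by blast
  obtain h \<epsilon> where h: "0 \<le> h" and e: "\<epsilon> > 0" and B: "{y. norm (inf \<bar>y\<bar> h) < \<epsilon>} \<subseteq> V"
    using un_neighbourhood_0_contains_ball[OF V(1,2)] by blast
  let ?B = "{y::'a. norm (inf \<bar>y\<bar> h) < \<epsilon>}"
  have "aw_open ?B" using AW openin_un_ball[OF h e] by (simp add: openin_aw_topology)
  moreover have "0 \<in> ?B" using e h by (simp add: inf_absorb1)
  ultimately obtain \<nu> \<delta> where nu: "\<nu> \<in> pos_dual" and d: "\<delta> > 0" and sub: "{y. \<nu> \<bar>y - 0\<bar> < \<delta>} \<subseteq> ?B"
    unfolding aw_open_def by blast
  define n0 where "n0 = nat \<lceil>\<nu> h / \<delta>\<rceil> + 1"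
  show "\<exists>n. \<not> (\<exists>x::nat \<Rightarrow> 'a. (\<forall>i<n. \<forall>j<n. i \<noteq> j \<longrightarrow> lat_disjoint (x i) (x j)) \<and> (\<forall>i<n. x i \<notin> U))"
  proof (intro exI[of _ n0] notI, elim exE conjE)
    fix x :: "nat \<Rightarrow> 'a" assume dj: "\<forall>i<n0. \<forall>j<n0. i \<noteq> j \<longrightarrow> lat_disjoint (x i) (x j)"
      and out: "\<forall>i<n0. x i \<notin> U"
    let ?f = "\<lambda>i. inf \<bar>x i\<bar> h"
    have "\<delta> \<le> \<nu> (?f i)" if "i < n0" for i
    proof (rule ccontr)
      have f0: "0 \<le> ?f i" using h by simp
      assume "\<not> \<delta> \<le> \<nu> (?f i)"
      hence "?f i \<in> {y. \<nu> \<bar>y - 0\<bar> < \<delta>}" using f0 by (simp add: abs_of_nonneg)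
      hence "?f i \<in> ?B" using sub by blast
      hence "x i \<in> ?B" using f0 by (simp add: abs_of_nonneg inf_absorb1)
      thus False using out that B V(3) by blast
    qed
    hence "(\<Sum>i<n0. \<delta>) \<le> (\<Sum>i<n0. \<nu> (?f i))" by (intro sum_mono) simp
    hence "real n0 * \<delta> \<le> (\<Sum>i<n0. \<nu> (?f i))" by simp
    also have "\<dots> = \<nu> (\<Sum>i<n0. ?f i)" by (rule linear_sum[OF pos_dual_linear[OF nu], symmetric])
    also have "\<dots> \<le> \<nu> h"
    proof (intro pos_dual_mono[OF nu] sum_disjoint_le[OF h])
      show "inf (?f i) (?f j) = 0" if "i < n0" "j < n0" "i \<noteq> j" for i j
        using dj that h by (intro inf_abs_disjoint) blast+
    qed (use h in simp_all)
    finally have "real n0 * \<delta> \<le> \<nu> h" .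
    moreover have "real n0 > \<nu> h / \<delta>" unfolding n0_def by linarith
    hence "real n0 * \<delta> > \<nu> h" using d by (simp add: field_simps)
    ultimately show False by simp
  qed
qed

section \<open>Monotone convergence from the sequential property\<close>

lemma inf_excess_eq_zero: fixes a b h :: "'a::banach_lattice"
  assumes h0: "0 \<le> h" and bh: "b \<le> h" and c1: "1 \<le> c" and ce: "1 \<le> c * e"
  shows "inf (sup (b - c *\<^sub>R a) 0) (sup (a - e *\<^sub>R h) 0) = 0"
proof -
  define X where "X = b - c *\<^sub>R a"
  define Y where "Y = c *\<^sub>R (a - e *\<^sub>R h)"
  have "X + Y = b - (c * e) *\<^sub>R h" unfolding X_def Y_def by (simp add: scaleR_diff_right)
  also have "\<dots> \<le> 0" using bh le_scaleR_of_one_le[OF h0 ce] by simp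
  finally have s: "X + Y \<le> 0" .
  have "inf X Y + inf X Y \<le> inf X Y + sup X Y" by (rule add_left_mono) (simp add: le_supI1)
  also have "\<dots> = X + Y" using add_eq_inf_sup[of X Y] by (simp only: add.commute)
  finally have "inf X Y + inf X Y \<le> 0" using s by (rule order_trans)
  hence z: "sup (inf X Y) 0 = 0" by (simp add: sup_absorb2)
  have "sup (a - e *\<^sub>R h) 0 \<le> c *\<^sub>R sup (a - e *\<^sub>R h) 0" using c1 by (intro le_scaleR_of_one_le) simp_all
  also have "\<dots> = sup Y 0" unfolding Y_def using c1 by (intro scaleR_sup_zero) simp
  finally have "inf (sup X 0) (sup (a - e *\<^sub>R h) 0) \<le> inf (sup X 0) (sup Y 0)" by (intro inf_mono) simp_all
  also have "\<dots> = 0" by (simp only: sup_inf_distrib2[symmetric] z)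
  finally show ?thesis unfolding X_def by (intro antisym) simp_all
qed

lemma norm_diff_excess_le: fixes v S h :: "'a::banach_lattice"
  assumes v0: "0 \<le> v" and S0: "0 \<le> S" and h0: "0 \<le> h" and c1: "1 \<le> c" and e0: "0 \<le> e"
  shows "norm (v - sup (v - c *\<^sub>R S - e *\<^sub>R h) 0) \<le> c * norm (inf v S) + e * norm h"
proof -
  have eh: "0 \<le> e *\<^sub>R h" using e0 h0 by (rule scaleR_nonneg_nonneg)
  have "v - sup (v - c *\<^sub>R S - e *\<^sub>R h) 0 = v - sup (v - (c *\<^sub>R S + e *\<^sub>R h)) 0" by (simp only: diff_diff_eq)
  also have "\<dots> = inf (c *\<^sub>R S + e *\<^sub>R h) v" by (rule diff_sup_diff_zero_eq)
  finally have eq: "v - sup (v - c *\<^sub>R S - e *\<^sub>R h) 0 = inf v (c *\<^sub>R S + e *\<^sub>R h)" by (simp add: inf_commute)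
  have "inf v (c *\<^sub>R S + e *\<^sub>R h) \<le> inf v (c *\<^sub>R S) + e *\<^sub>R h" using eh by (rule inf_add_le_inf_add)
  also have "\<dots> \<le> c *\<^sub>R inf v S + e *\<^sub>R h" using v0 c1 by (intro add_right_mono inf_scaleR_le)
  finally have le: "inf v (c *\<^sub>R S + e *\<^sub>R h) \<le> c *\<^sub>R inf v S + e *\<^sub>R h" .
  have "0 \<le> inf v (c *\<^sub>R S + e *\<^sub>R h)" using v0 S0 c1 eh by (simp add: scaleR_nonneg_nonneg add_nonneg_nonneg)
  hence "norm (inf v (c *\<^sub>R S + e *\<^sub>R h)) \<le> norm (c *\<^sub>R inf v S) + norm (e *\<^sub>R h)"
    using le by (rule norm_le_add_of_le_add)
  also have "\<dots> = c * norm (inf v S) + e * norm h" using c1 e0 by simp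
  finally show ?thesis unfolding eq .
qed

text \<open>Removing from \<open>a\<^sub>j\<^sub>+\<^sub>1\<close> the multiple \<open>2\<^sup>j\<^sup>+\<^sup>1 S\<^sub>j\<close> of a bound of its predecessors and
  the multiple \<open>2\<^sup>-\<^sup>j\<^sup>-\<^sup>1 h\<close> of the order bound leaves a disjoint sequence, at a cost in norm that
  tends to 0.\<close>

lemma almost_disjoint_null: fixes a :: "nat \<Rightarrow> 'a::banach_lattice"
  assumes D: "disjoint_order_bounded_null TYPE('a)"
    and a0: "\<And>j. 0 \<le> a j" and ah: "\<And>j. a j \<le> h" and aS: "\<And>k j. k \<le> j \<Longrightarrow> a k \<le> S j"
    and small: "\<And>j. norm (inf (a (Suc j)) (S j)) \<le> (1/8)^Suc j"
  shows "(\<lambda>j. a (Suc j)) \<longlonglongrightarrow> 0"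
proof -
  have h0: "0 \<le> h" using a0[of 0] ah[of 0] by (rule order_trans)
  have S0: "0 \<le> S j" for j using a0[of j] aS[of j j] by (rule order_trans) simp
  define u where "u j = sup (a (Suc j) - (2^Suc j) *\<^sub>R S j - ((1/2)^Suc j) *\<^sub>R h) 0" for j
  have uh: "u j \<le> h" for j
  proof -
    have "0 \<le> (2^Suc j) *\<^sub>R S j + ((1/2::real)^Suc j) *\<^sub>R h" using S0 h0 by (simp add: scaleR_nonneg_nonneg)
    hence "a (Suc j) - ((2^Suc j) *\<^sub>R S j + ((1/2)^Suc j) *\<^sub>R h) \<le> h"
      using ah[of "Suc j"] by (simp add: diff_le_eq add_increasing2)
    thus ?thesis unfolding u_def using h0 by (simp add: diff_diff_eq)
  qed
  have udj: "inf (u i) (u j) = 0" if "i < j" for i j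
  proof -
    have "(2^Suc j) *\<^sub>R a (Suc i) \<le> (2^Suc j) *\<^sub>R S j"
      using aS[of "Suc i" j] that by (intro scaleR_left_mono) simp_all
    hence "(2^Suc j) *\<^sub>R a (Suc i) \<le> (2^Suc j) *\<^sub>R S j + ((1/2::real)^Suc j) *\<^sub>R h"
      by (rule add_increasing2[rotated]) (simp add: h0 scaleR_nonneg_nonneg)
    hence "a (Suc j) - (2^Suc j) *\<^sub>R S j - ((1/2)^Suc j) *\<^sub>R h \<le> a (Suc j) - (2^Suc j) *\<^sub>R a (Suc i)"
      by (simp only: diff_diff_eq diff_left_mono)
    hence le1: "u j \<le> sup (a (Suc j) - (2^Suc j) *\<^sub>R a (Suc i)) 0" unfolding u_def by (rule sup_mono) simp
    have "a (Suc i) - (2^Suc i) *\<^sub>R S i - ((1/2)^Suc i) *\<^sub>R h \<le> a (Suc i) - ((1/2)^Suc i) *\<^sub>R h"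
      using S0[of i] by (simp add: scaleR_nonneg_nonneg)
    hence le2: "u i \<le> sup (a (Suc i) - ((1/2)^Suc i) *\<^sub>R h) 0" unfolding u_def by (rule sup_mono) simp
    have "(2::real)^Suc j * (1/2)^Suc i = 2^(j - i)"
      using that by (simp add: power_divide field_simps power_add[symmetric])
    hence ce: "1 \<le> (2::real)^Suc j * (1/2)^Suc i" by simp
    have "inf (u j) (u i) \<le> inf (sup (a (Suc j) - (2^Suc j) *\<^sub>R a (Suc i)) 0) (sup (a (Suc i) - ((1/2)^Suc i) *\<^sub>R h) 0)"
      using le1 le2 by (rule inf_mono)
    also have "\<dots> = 0" by (rule inf_excess_eq_zero[OF h0 ah _ ce]) (rule one_le_power, simp)
    finally show ?thesis unfolding u_def by (intro antisym) (simp_all add: inf_commute)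
  qed
  have uN: "u \<longlonglongrightarrow> 0" using udj uh by (intro disjoint_order_bounded_nullD'[OF D]) (simp_all add: u_def)
  have bnd: "norm (a (Suc j)) \<le> norm (u j) + ((1/4)^Suc j + (1/2)^Suc j * norm h)" for j
  proof -
    have "norm (a (Suc j) - u j) \<le> 2^Suc j * norm (inf (a (Suc j)) (S j)) + (1/2)^Suc j * norm h"
      unfolding u_def using a0 S0 h0 by (intro norm_diff_excess_le one_le_power) simp_all
    also have "2^Suc j * norm (inf (a (Suc j)) (S j)) \<le> (2::real)^Suc j * (1/8)^Suc j"
      using small[of j] by (intro mult_left_mono) simp_all
    also have "(2::real)^Suc j * (1/8)^Suc j = (1/4)^Suc j" by (simp add: power_mult_distrib[symmetric])
    finally show ?thesis using norm_triangle_ineq[of "u j" "a (Suc j) - u j"] by simp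
  qed
  have tl: "(\<lambda>j. (1/4::real)^Suc j + (1/2)^Suc j * norm h) \<longlonglongrightarrow> 0"
  proof (rule tendsto_add_zero)
    show "(\<lambda>j. (1/4::real)^Suc j) \<longlonglongrightarrow> 0" by (rule LIMSEQ_Suc) (rule LIMSEQ_power_zero, simp)
    have "(\<lambda>j. (1/2::real)^Suc j) \<longlonglongrightarrow> 0" by (rule LIMSEQ_Suc) (rule LIMSEQ_power_zero, simp)
    thus "(\<lambda>j. (1/2::real)^Suc j * norm h) \<longlonglongrightarrow> 0" by (rule tendsto_mult_left_zero)
  qed
  have "(\<lambda>j. norm (u j) + ((1/4::real)^Suc j + (1/2)^Suc j * norm h)) \<longlonglongrightarrow> 0"
    using tendsto_add_zero[OF tendsto_norm_zero[OF uN] tl] .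
  thus ?thesis by (rule Lim_null_comparison[OF always_eventually[OF allI[OF bnd]]])
qed

lemma almost_disjoint_subsequence: fixes v :: "nat \<Rightarrow> 'a::banach_lattice"
  assumes v0: "\<And>n. 0 \<le> v n" and vh: "\<And>n. v n \<le> h"
    and meets: "\<And>n. (\<lambda>m. inf (v n) (v m)) \<longlonglongrightarrow> 0" and fr: "\<And>N. \<exists>m\<ge>N. \<eta> \<le> norm (v m)"
  obtains r S where "\<And>j. \<eta> \<le> norm (v (r j))" "\<And>k j. k \<le> j \<Longrightarrow> v (r k) \<le> S j"
    "\<And>j. norm (inf (v (r (Suc j))) (S j)) \<le> (1/8)^Suc j"
proof -
  define P where "P = (\<lambda>(j::nat) (m, S). \<eta> \<le> norm (v m) \<and> v m \<le> S \<and> 0 \<le> S \<and> S \<le> h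
      \<and> (\<lambda>k. inf (v k) S) \<longlonglongrightarrow> 0)"
  define Q where "Q = (\<lambda>(j::nat) (m::nat, S) (m', S'). S' = sup S (v m')
      \<and> norm (inf (v m') S) \<le> (1/8::real)^(Suc j))"
  have "\<exists>f. \<forall>j. P j (f j) \<and> Q j (f j) (f (Suc j))"
  proof (rule dependent_nat_choice)
    obtain m0 where m0: "\<eta> \<le> norm (v m0)" using fr by blast
    have "(\<lambda>k. inf (v k) (v m0)) \<longlonglongrightarrow> 0" using meets[of m0] by (simp add: inf_commute)
    thus "\<exists>x. P 0 x" unfolding P_def using m0 v0 vh by (intro exI[of _ "(m0, v m0)"]) simp
  next
    fix ms :: "nat \<times> 'a" and j :: nat assume Pj: "P j ms"
    obtain m S where ms: "ms = (m, S)" by (cases ms)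
    have S: "0 \<le> S" "S \<le> h" "(\<lambda>k. inf (v k) S) \<longlonglongrightarrow> 0" using Pj unfolding P_def ms by simp_all
    have "eventually (\<lambda>k. norm (inf (v k) S) < (1/8)^(Suc j)) sequentially"
      using S(3) by (rule LIMSEQ_0_eventually_norm_less) simp
    then obtain N where N: "\<And>k. k \<ge> N \<Longrightarrow> norm (inf (v k) S) < (1/8)^(Suc j)"
      unfolding eventually_sequentially by blast
    obtain m' where m': "m' \<ge> N" "\<eta> \<le> norm (v m')" using fr by blast
    have "(\<lambda>k. inf (v k) (sup S (v m'))) \<longlonglongrightarrow> 0"
    proof (rule Lim_null_comparison)
      have "norm (inf (v k) (sup S (v m'))) \<le> norm (inf (v k) S) + norm (inf (v k) (v m'))" for k
        using v0 S(1) by (intro norm_le_add_of_le_add inf_sup_le_add_inf) (simp_all add: le_supI1)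
      thus "eventually (\<lambda>k. norm (inf (v k) (sup S (v m'))) \<le> norm (inf (v k) S) + norm (inf (v k) (v m'))) sequentially"
        by (intro always_eventually allI)
      show "(\<lambda>k. norm (inf (v k) S) + norm (inf (v k) (v m'))) \<longlonglongrightarrow> 0"
        using S(3) meets[of m'] by (intro tendsto_add_zero tendsto_norm_zero) (simp_all add: inf_commute)
    qed
    hence "P (Suc j) (m', sup S (v m'))" unfolding P_def using m'(2) S vh[of m'] by (simp add: le_supI1)
    moreover have "Q j ms (m', sup S (v m'))" unfolding Q_def ms using N[OF m'(1)] by simp
    ultimately show "\<exists>y. P (Suc j) y \<and> Q j ms y" by blast
  qed
  then obtain f where f: "\<And>j. P j (f j)" "\<And>j. Q j (f j) (f (Suc j))" by blast
  define r where "r j = fst (f j)" for j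
  define S where "S j = snd (f j)" for j
  have F1: "\<eta> \<le> norm (v (r j))" and F2: "v (r j) \<le> S j" for j
    using f(1)[of j] unfolding P_def r_def S_def by (simp_all add: case_prod_beta)
  have F3: "S (Suc j) = sup (S j) (v (r (Suc j)))"
    and F4: "norm (inf (v (r (Suc j))) (S j)) \<le> (1/8)^Suc j" for j
    using f(2)[of j] unfolding Q_def r_def S_def by (simp_all add: case_prod_beta)
  have "S k \<le> S j" if "k \<le> j" for k j
    using lift_Suc_mono_le[of S, OF _ that] F3 by simp
  hence "v (r k) \<le> S j" if "k \<le> j" for k j using F2[of k] that by (blast intro: order_trans)
  from F1 this F4 show ?thesis by (rule that)
qed

text \<open>\<open>vanishing_meets K v\<close> says that the infimum of any \<open>K + 1\<close> terms of \<open>v\<close> with distinct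
  indices is 0; for \<open>K = 1\<close> this is disjointness.\<close>

fun vanishing_meets :: "nat \<Rightarrow> (nat \<Rightarrow> 'a::banach_lattice) \<Rightarrow> bool" where
  "vanishing_meets 0 v \<longleftrightarrow> (\<forall>n. v n = 0)"
| "vanishing_meets (Suc K) v \<longleftrightarrow>
     (\<forall>n. vanishing_meets K (\<lambda>m. if m = n then 0 else inf (v n) (v m)))"

lemma vanishing_meets_zero: "vanishing_meets K (\<lambda>_. 0 :: 'a::banach_lattice)"
proof (induction K)
  case (Suc K)
  have "(\<lambda>m::nat. if m = n then 0 else inf (0::'a) 0) = (\<lambda>_. 0)" for n :: nat
    by (rule ext) (simp only: inf_idem if_cancel)
  thus ?case using Suc by simp
qed simp

lemma vanishing_meets_null: fixes v :: "nat \<Rightarrow> 'a::banach_lattice"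
  assumes D: "disjoint_order_bounded_null TYPE('a)"
  shows "vanishing_meets K v \<Longrightarrow> (\<And>n. 0 \<le> v n) \<Longrightarrow> (\<And>n. v n \<le> h) \<Longrightarrow> v \<longlonglongrightarrow> 0"
proof (induction K arbitrary: v)
  case 0
  hence "v = (\<lambda>_. 0)" by auto
  thus ?case by simp
next
  case (Suc K)
  note v0 = Suc.prems(2) and vh = Suc.prems(3)
  have h0: "0 \<le> h" using v0[of 0] vh[of 0] by (rule order_trans)
  have meets: "(\<lambda>m. inf (v n) (v m)) \<longlonglongrightarrow> 0" for n
  proof -
    have "(\<lambda>m. if m = n then 0 else inf (v n) (v m)) \<longlonglongrightarrow> 0"
    proof (rule Suc.IH)
      show "vanishing_meets K (\<lambda>m. if m = n then 0 else inf (v n) (v m))" using Suc.prems(1) by simp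
      show "0 \<le> (if m = n then 0 else inf (v n) (v m))" for m using v0 by simp
      show "(if m = n then 0 else inf (v n) (v m)) \<le> h" for m using vh h0 by (simp add: le_infI1)
    qed
    moreover have "eventually (\<lambda>m. (if m = n then 0 else inf (v n) (v m)) = inf (v n) (v m)) sequentially"
      unfolding eventually_sequentially by (intro exI[of _ "Suc n"]) simp
    ultimately show ?thesis by (rule Lim_transform_eventually)
  qed
  show "v \<longlonglongrightarrow> 0"
  proof (rule ccontr)
    assume "\<not> v \<longlonglongrightarrow> 0"
    then obtain \<eta> where \<eta>: "\<eta> > 0" and frA: "\<forall>N. \<exists>m\<ge>N. \<eta> \<le> norm (v m)"
      using not_LIMSEQ_0_frequently_norm_ge by metis
    have fr: "\<exists>m\<ge>N. \<eta> \<le> norm (v m)" for N using frA by blast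
    obtain r S where r: "\<And>j. \<eta> \<le> norm (v (r j))" and S: "\<And>k j. k \<le> j \<Longrightarrow> v (r k) \<le> S j"
      and small: "\<And>j. norm (inf (v (r (Suc j))) (S j)) \<le> (1/8)^Suc j"
      using almost_disjoint_subsequence[OF v0 vh meets fr] by blast
    have "(\<lambda>j. v (r (Suc j))) \<longlonglongrightarrow> 0"
      using almost_disjoint_null[OF D, of "v \<circ> r" h S] v0 vh S small by simp
    then obtain j where "norm (v (r (Suc j))) < \<eta>"
      using LIMSEQ_0_eventually_norm_less[OF _ \<eta>] unfolding eventually_sequentially by blast
    thus False using r[of "Suc j"] by simp
  qed
qed

lemma card_scaleR_le_of_partial_sums_le: fixes y :: "nat \<Rightarrow> 'a::banach_lattice"
  assumes y0: "\<And>n. 0 \<le> y n" and sh: "\<And>N. (\<Sum>k<N. y k) \<le> h"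
    and T: "finite T" and b: "\<And>i. i \<in> T \<Longrightarrow> b \<le> y i"
  shows "real (card T) *\<^sub>R b \<le> h"
proof -
  obtain M where "T \<subseteq> {..<M}" using T finite_nat_bounded by (meson lessThan_iff subsetI)
  have "real (card T) *\<^sub>R b = (\<Sum>i\<in>T. b)" by (simp add: sum_constant_scaleR)
  also have "\<dots> \<le> (\<Sum>i\<in>T. y i)" using b by (rule sum_mono)
  also have "\<dots> \<le> (\<Sum>k<M. y k)" using \<open>T \<subseteq> {..<M}\<close> y0 by (intro sum_mono2) simp_all
  also have "\<dots> \<le> h" by (rule sh)
  finally show ?thesis .
qed

text \<open>Any \<open>K + 1\<close> further terms together with those in \<open>S\<close> are more than \<open>1/\<epsilon>\<close> terms
  above a common element, whose multiple by their number is then bounded by \<open>h\<close>.\<close>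

lemma vanishing_meets_excess: fixes y :: "nat \<Rightarrow> 'a::banach_lattice"
  assumes y0: "\<And>n. 0 \<le> y n" and sh: "\<And>N. (\<Sum>k<N. y k) \<le> h" and e: "\<epsilon> > 0"
  shows "finite S \<Longrightarrow> 1 \<le> real (card S + K + 1) * \<epsilon> \<Longrightarrow> 0 \<le> a \<Longrightarrow> (\<forall>i\<in>S. a \<le> y i) \<Longrightarrow>
    vanishing_meets K (\<lambda>m. if m \<in> S then 0 else sup (inf a (y m) - \<epsilon> *\<^sub>R h) 0)"
proof (induction K arbitrary: S a)
  case 0
  have "sup (inf a (y m) - \<epsilon> *\<^sub>R h) 0 = 0" if m: "m \<notin> S" for m
  proof -
    let ?b = "inf a (y m)"
    have "real (card (insert m S)) *\<^sub>R ?b \<le> h"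
      using "0.prems"(1,4) by (intro card_scaleR_le_of_partial_sums_le[OF y0 sh]) (auto intro: le_infI1)
    hence "\<epsilon> *\<^sub>R (real (card S + 1) *\<^sub>R ?b) \<le> \<epsilon> *\<^sub>R h"
      using m "0.prems"(1) e by (intro scaleR_left_mono) simp_all
    moreover have "?b \<le> (real (card S + 1) * \<epsilon>) *\<^sub>R ?b"
      using "0.prems"(2,3) y0[of m] by (intro le_scaleR_of_one_le) simp_all
    ultimately have "?b \<le> \<epsilon> *\<^sub>R h" by (simp add: mult.commute)
    thus ?thesis by (simp add: sup_absorb2)
  qed
  thus ?case by simp
next
  case (Suc K)
  define w where "w = (\<lambda>m. if m \<in> S then 0 else sup (inf a (y m) - \<epsilon> *\<^sub>R h) 0)"
  have w0: "0 \<le> w m" for m unfolding w_def by simp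
  show ?case unfolding w_def[symmetric] vanishing_meets.simps
  proof
    fix n
    show "vanishing_meets K (\<lambda>m. if m = n then 0 else inf (w n) (w m))"
    proof (cases "n \<in> S")
      case True
      have "(\<lambda>m. if m = n then 0 else inf (w n) (w m)) = (\<lambda>_. 0)"
        using True w0 by (intro ext) (simp add: w_def inf_absorb1)
      thus ?thesis by (simp add: vanishing_meets_zero)
    next
      case False
      have "(\<lambda>m. if m = n then 0 else inf (w n) (w m)) =
         (\<lambda>m. if m \<in> insert n S then 0 else sup (inf (inf a (y n)) (y m) - \<epsilon> *\<^sub>R h) 0)"
        using False w0[of n] by (intro ext) (auto simp: w_def inf_excess_eq_excess_inf inf_aci inf_absorb1 inf_absorb2)
      moreover have "vanishing_meets K (\<lambda>m. if m \<in> insert n S then 0 else sup (inf (inf a (y n)) (y m) - \<epsilon> *\<^sub>R h) 0)"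
        using Suc.prems False y0[of n] by (intro Suc.IH) (auto intro: le_infI1)
      ultimately show ?thesis by simp
    qed
  qed
qed

lemma order_bounded_series_terms_null: fixes y :: "nat \<Rightarrow> 'a::banach_lattice"
  assumes D: "disjoint_order_bounded_null TYPE('a)" and y0: "\<And>n. 0 \<le> y n" and sh: "\<And>N. (\<Sum>k<N. y k) \<le> h"
  shows "y \<longlonglongrightarrow> 0"
  unfolding LIMSEQ_0_iff_eventually_norm_less
proof (intro allI impI)
  fix e :: real assume e: "e > 0"
  have h0: "0 \<le> h" using sh[of 0] by simp
  have yh: "y n \<le> h" for n
  proof -
    have "y n \<le> (\<Sum>k<n. y k) + y n" using y0 by (intro add_increasing sum_nonneg) simp_all
    also have "\<dots> \<le> h" using sh[of "Suc n"] by simp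
    finally show ?thesis .
  qed
  define \<epsilon> where "\<epsilon> = e / (2 * (norm h + 1))"
  have ep: "\<epsilon> > 0" and eh: "\<epsilon> * norm h < e / 2"
    unfolding \<epsilon>_def using e by (simp_all add: field_simps add_pos_nonneg)
  define K where "K = nat \<lceil>1 / \<epsilon>\<rceil>"
  have "1 / \<epsilon> \<le> real K" unfolding K_def by linarith
  hence "1 \<le> real K * \<epsilon>" using ep by (simp add: field_simps)
  hence K: "1 \<le> real (card ({}::nat set) + K + 1) * \<epsilon>" using ep by (simp add: distrib_right)
  let ?v = "\<lambda>m. sup (y m - \<epsilon> *\<^sub>R h) 0"
  have "vanishing_meets K (\<lambda>m. if m \<in> {} then 0 else sup (inf h (y m) - \<epsilon> *\<^sub>R h) 0)"
    using y0 sh ep K h0 by (intro vanishing_meets_excess) simp_all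
  hence "vanishing_meets K ?v" using yh by (simp add: inf_absorb2)
  moreover have "?v n \<le> h" for n
    using yh[of n] h0 ep by (simp add: diff_le_eq add_increasing2 scaleR_nonneg_nonneg)
  ultimately have "?v \<longlonglongrightarrow> 0" by (intro vanishing_meets_null[OF D]) simp_all
  hence "eventually (\<lambda>n. norm (?v n) < e / 2) sequentially"
    by (rule LIMSEQ_0_eventually_norm_less) (use e in simp)
  thus "eventually (\<lambda>n. norm (y n) < e) sequentially"
  proof (rule eventually_mono)
    fix n assume "norm (?v n) < e / 2"
    moreover have "y n \<le> ?v n + \<epsilon> *\<^sub>R h" by (simp only: diff_le_eq[symmetric]) (rule sup_ge1)
    hence "norm (y n) \<le> norm (?v n) + \<epsilon> * norm h" using y0 ep norm_le_add_of_le_add by fastforce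
    ultimately show "norm (y n) < e" using eh by simp
  qed
qed

lemma incseq_order_bounded_convergent: fixes x :: "nat \<Rightarrow> 'a::banach_lattice"
  assumes D: "disjoint_order_bounded_null TYPE('a)"
    and inc: "\<And>n. x n \<le> x (Suc n)" and x0: "\<And>n. 0 \<le> x n" and xh: "\<And>n. x n \<le> h"
  shows "convergent x"
proof -
  have mono: "x m \<le> x n" if "m \<le> n" for m n using lift_Suc_mono_le[of x, OF inc that] .
  have C: "\<exists>N. \<forall>m\<ge>N. norm (x m - x N) < \<epsilon>" if e: "\<epsilon> > 0" for \<epsilon>
  proof (rule ccontr)
    assume "\<not> (\<exists>N. \<forall>m\<ge>N. norm (x m - x N) < \<epsilon>)"
    hence ex: "\<exists>m. m \<ge> N \<and> \<epsilon> \<le> norm (x m - x N)" for N by (meson not_less)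
    define nn where "nn = rec_nat 0 (\<lambda>_ k. SOME m. m \<ge> k \<and> \<epsilon> \<le> norm (x m - x k))"
    have nnS: "nn (Suc j) = (SOME m. m \<ge> nn j \<and> \<epsilon> \<le> norm (x m - x (nn j)))" for j unfolding nn_def by simp
    have nnP: "nn (Suc j) \<ge> nn j \<and> \<epsilon> \<le> norm (x (nn (Suc j)) - x (nn j))" for j
      unfolding nnS by (rule someI_ex[OF ex])
    let ?y = "\<lambda>j. x (nn (Suc j)) - x (nn j)"
    have "?y \<longlonglongrightarrow> 0"
    proof (rule order_bounded_series_terms_null[OF D])
      show "0 \<le> ?y n" for n using mono nnP by simp
      show "(\<Sum>k<N. ?y k) \<le> h" for N
      proof -
        have "(\<Sum>k<N. ?y k) = x (nn N) - x (nn 0)" by (rule sum_lessThan_telescope)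
        also have "\<dots> \<le> h" using xh[of "nn N"] x0[of "nn 0"] by (simp add: diff_le_eq add_increasing2)
        finally show ?thesis .
      qed
    qed
    hence "eventually (\<lambda>j. norm (?y j) < \<epsilon>) sequentially" using e by (rule LIMSEQ_0_eventually_norm_less)
    then obtain j where "norm (?y j) < \<epsilon>" unfolding eventually_sequentially by blast
    thus False using nnP[of j] by simp
  qed
  have "Cauchy x"
  proof (rule CauchyI)
    fix e :: real assume "e > 0"
    then obtain N where N: "\<forall>m\<ge>N. norm (x m - x N) < e" using C by blast
    have "norm (x m - x n) < e" if "m \<ge> N" "n \<ge> N" for m n
    proof (cases "n \<le> m")
      case True
      have "norm (x m - x n) \<le> norm (x m - x N)"
        using mono[OF True] mono[OF that(2)] by (intro norm_mono_nonneg) simp_all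
      thus ?thesis using N that by force
    next
      case False
      have "norm (x m - x n) = norm (x n - x m)" by (rule norm_minus_commute)
      also have "\<dots> \<le> norm (x n - x N)"
        using mono[of m n] False mono[OF that(1)] by (intro norm_mono_nonneg) simp_all
      finally show ?thesis using N that by force
    qed
    thus "\<exists>M. \<forall>m\<ge>M. \<forall>n\<ge>M. norm (x m - x n) < e" by blast
  qed
  thus ?thesis by (rule Cauchy_convergent)
qed

lemma decseq_nonneg_convergent: fixes t :: "nat \<Rightarrow> 'a::banach_lattice"
  assumes D: "disjoint_order_bounded_null TYPE('a)"
    and dec: "\<And>n. t (Suc n) \<le> t n" and t0: "\<And>n. 0 \<le> t n"
  shows "convergent t"
proof -
  have "t n \<le> t 0" for n using lift_Suc_antimono_le[of t, OF dec] by simp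
  hence "convergent (\<lambda>n. t 0 - t n)" using dec t0
    by (intro incseq_order_bounded_convergent[OF D, where h = "t 0"]) (simp_all add: diff_left_mono)
  then obtain l where "(\<lambda>n. t 0 - t n) \<longlonglongrightarrow> l" unfolding convergent_def by blast
  hence "(\<lambda>n. t 0 - (t 0 - t n)) \<longlonglongrightarrow> t 0 - l" by (intro tendsto_diff) simp_all
  thus ?thesis unfolding convergent_def by auto
qed

text \<open>Otherwise a decreasing sequence in \<open>D\<close> with steps of norm at least \<open>\<eta>\<close> would exist, but
  such sequences converge.\<close>

lemma downward_directed_norm_stabilizes: fixes D :: "'a::banach_lattice set"
  assumes DN: "disjoint_order_bounded_null TYPE('a)" and dd: "downward_directed D"
    and pos: "\<And>d. d \<in> D \<Longrightarrow> 0 \<le> d" and "\<eta> > 0"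
  shows "\<exists>d\<in>D. \<forall>e\<in>D. e \<le> d \<longrightarrow> norm (d - e) < \<eta>"
proof (rule ccontr)
  assume "\<not> ?thesis"
  hence st: "\<forall>d\<in>D. \<exists>e\<in>D. e \<le> d \<and> \<eta> \<le> norm (d - e)" by (meson not_less)
  have "\<exists>f. \<forall>j. f j \<in> D \<and> (f (Suc j) \<le> f j \<and> \<eta> \<le> norm (f j - f (Suc j)))"
  proof (rule dependent_nat_choice[where P="\<lambda>j x. x \<in> D" and Q="\<lambda>j d d'. d' \<le> d \<and> \<eta> \<le> norm (d - d')"])
    show "\<exists>x. x \<in> D" using dd unfolding downward_directed_def by blast
    fix d :: 'a and j :: nat assume "d \<in> D"
    thus "\<exists>y. y \<in> D \<and> y \<le> d \<and> \<eta> \<le> norm (d - y)" using st by blast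
  qed
  then obtain f where fD: "\<And>j. f j \<in> D" and fdec: "\<And>j. f (Suc j) \<le> f j"
    and fst: "\<And>j. \<eta> \<le> norm (f j - f (Suc j))" by blast
  have "convergent f" using DN fdec pos[OF fD] by (rule decseq_nonneg_convergent)
  then obtain L where L: "f \<longlonglongrightarrow> L" unfolding convergent_def by blast
  have "(\<lambda>j. f j - f (Suc j)) \<longlonglongrightarrow> L - L" using L LIMSEQ_Suc[OF L] by (rule tendsto_diff)
  hence "eventually (\<lambda>j. norm (f j - f (Suc j)) < \<eta>) sequentially"
    using \<open>\<eta> > 0\<close> by (intro LIMSEQ_0_eventually_norm_less) simp_all
  then obtain j where "norm (f j - f (Suc j)) < \<eta>" unfolding eventually_sequentially by blast
  thus False using fst[of j] by simp
qed

lemma lower_bound_if_norm_stabilizing: fixes f :: "nat \<Rightarrow> 'a::banach_lattice"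
  assumes dir: "\<And>a b. a \<in> D \<Longrightarrow> b \<in> D \<Longrightarrow> \<exists>c\<in>D. c \<le> a \<and> c \<le> b"
    and fD: "\<And>j. f j \<in> D" and fC: "\<And>j e. e \<in> D \<Longrightarrow> e \<le> f j \<Longrightarrow> norm (f j - e) < (1/2)^j"
    and L: "f \<longlonglongrightarrow> L" and d: "d \<in> D"
  shows "L \<le> d"
proof -
  have "\<forall>j. \<exists>e. e \<in> D \<and> e \<le> d \<and> e \<le> f j" using dir[OF d fD] by blast
  then obtain g where g: "\<And>j. g j \<in> D" "\<And>j. g j \<le> d" "\<And>j. g j \<le> f j" by metis
  have "(\<lambda>j. sup (f j - d) 0) \<longlonglongrightarrow> 0"
  proof (rule Lim_null_comparison)
    have "norm (sup (f j - d) 0) \<le> (1/2::real)^j" for j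
    proof -
      have "sup (f j - d) 0 \<le> f j - g j" using g by (intro le_supI) simp_all
      hence "norm (sup (f j - d) 0) \<le> norm (f j - g j)" by (intro norm_mono_nonneg) simp_all
      also have "\<dots> < (1/2)^j" using fC g by blast
      finally show ?thesis by simp
    qed
    thus "eventually (\<lambda>j. norm (sup (f j - d) 0) \<le> (1/2::real)^j) sequentially"
      by (intro always_eventually allI)
    show "(\<lambda>j. (1/2::real)^j) \<longlonglongrightarrow> 0" by (rule LIMSEQ_power_zero) simp
  qed
  moreover have "(\<lambda>j. sup (f j - d) 0) \<longlonglongrightarrow> sup (L - d) 0" using L by (intro tendsto_sup_zero tendsto_diff) simp_all
  ultimately have "sup (L - d) 0 = 0" by (rule LIMSEQ_unique[rotated])
  hence "L - d \<le> 0" by (metis sup_ge1)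
  thus ?thesis by simp
qed

lemma order_continuous_if_disjoint_null:
  assumes DN: "disjoint_order_bounded_null TYPE('a::banach_lattice)"
  shows "order_continuous TYPE('a)"
  unfolding order_continuous_def
proof (rule allI, rule impI)
  fix D :: "'a set" assume a: "downward_directed D \<and> (\<forall>d\<in>D. 0 \<le> d) \<and> (\<forall>z. (\<forall>d\<in>D. z \<le> d) \<longrightarrow> z \<le> 0)"
  have dir: "\<And>a b. a \<in> D \<Longrightarrow> b \<in> D \<Longrightarrow> \<exists>c\<in>D. c \<le> a \<and> c \<le> b"
    using a unfolding downward_directed_def by blast
  have pos: "\<And>d. d \<in> D \<Longrightarrow> 0 \<le> d" and lb: "\<And>z. (\<forall>d\<in>D. z \<le> d) \<Longrightarrow> z \<le> 0" using a by blast+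
  have stab: "\<exists>d\<in>D. \<forall>e\<in>D. e \<le> d \<longrightarrow> norm (d - e) < \<eta>" if "\<eta> > 0" for \<eta>
    using downward_directed_norm_stabilizes[OF DN _ pos that] a by blast
  define P where "P = (\<lambda>(j::nat) d. d \<in> D \<and> (\<forall>e\<in>D. e \<le> d \<longrightarrow> norm (d - e) < (1/2::real)^j))"
  have "\<exists>f. \<forall>j. P j (f j) \<and> f (Suc j) \<le> f j"
  proof (rule dependent_nat_choice)
    show "\<exists>x. P 0 x" using stab[of 1] unfolding P_def by (simp add: Bex_def)
  next
    fix d j assume Pj: "P j d"
    have "(1/2::real)^Suc j > 0" by simp
    then obtain d0 where d0: "d0 \<in> D" "\<forall>e\<in>D. e \<le> d0 \<longrightarrow> norm (d0 - e) < (1/2)^Suc j"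
      using stab by blast
    obtain c where c: "c \<in> D" "c \<le> d0" "c \<le> d" using dir[OF d0(1)] Pj unfolding P_def by blast
    have "norm (c - e) < (1/2)^Suc j" if e: "e \<in> D" "e \<le> c" for e
    proof -
      have "norm (c - e) \<le> norm (d0 - e)" using e c by (intro norm_mono_nonneg) simp_all
      also have "\<dots> < (1/2)^Suc j" using d0(2) e c by force
      finally show ?thesis .
    qed
    hence "P (Suc j) c" unfolding P_def using c(1) by blast
    thus "\<exists>y. P (Suc j) y \<and> y \<le> d" using c by blast
  qed
  then obtain f where f: "\<And>j. P j (f j)" "\<And>j. f (Suc j) \<le> f j" by blast
  have fD: "f j \<in> D" for j using f(1)[of j] unfolding P_def by simp
  have fC: "\<And>e. e \<in> D \<Longrightarrow> e \<le> f j \<Longrightarrow> norm (f j - e) < (1/2)^j" for j using f(1)[of j] unfolding P_def by simp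
  have "convergent f" using DN f(2) pos[OF fD] by (rule decseq_nonneg_convergent)
  then obtain L where L: "f \<longlonglongrightarrow> L" unfolding convergent_def by blast
  have "L \<le> 0" using lower_bound_if_norm_stabilizing[OF dir fD fC L] by (intro lb) blast
  moreover have "0 \<le> L" using L by (rule LIMSEQ_ge_of_eventually_ge) (simp add: pos[OF fD])
  ultimately have "L = 0" by simp
  show "\<forall>\<epsilon>>0. \<exists>d\<in>D. norm d < \<epsilon>"
  proof (intro allI impI)
    fix \<epsilon> :: real assume "\<epsilon> > 0"
    hence "eventually (\<lambda>j. norm (f j) < \<epsilon>) sequentially"
      using L \<open>L = 0\<close> by (intro LIMSEQ_0_eventually_norm_less) simp_all
    then obtain j where "norm (f j) < \<epsilon>" unfolding eventually_sequentially by blast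
    thus "\<exists>d\<in>D. norm d < \<epsilon>" using fD by blast
  qed
qed

section \<open>Hahn-Banach extension for sublinear functionals\<close>

text \<open>Partial linear functionals are encoded by their graphs, as sets of pairs.\<close>

definition dominated_graph :: "('a::real_vector \<Rightarrow> real) \<Rightarrow> 'a \<Rightarrow> ('a \<times> real) set \<Rightarrow> bool" where
  "dominated_graph p y0 G \<longleftrightarrow> (\<forall>x a b. (x,a) \<in> G \<longrightarrow> (x,b) \<in> G \<longrightarrow> a = b)
     \<and> (\<forall>x a x' a'. (x,a) \<in> G \<longrightarrow> (x',a') \<in> G \<longrightarrow> (x + x', a + a') \<in> G)
     \<and> (\<forall>x a c. (x,a) \<in> G \<longrightarrow> (c *\<^sub>R x, c * a) \<in> G)
     \<and> (\<forall>x a. (x,a) \<in> G \<longrightarrow> a \<le> p x)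
     \<and> (y0, p y0) \<in> G"

lemma dominated_graph_line:
  fixes p :: "'a::real_vector \<Rightarrow> real"
  assumes sub: "\<And>x y. p (x + y) \<le> p x + p y" and hom: "\<And>c x. 0 \<le> c \<Longrightarrow> p (c *\<^sub>R x) = c * p x"
  shows "dominated_graph p y0 (range (\<lambda>t. (t *\<^sub>R y0, t * p y0)))"
  unfolding dominated_graph_def
proof (intro conjI allI impI)
  have p0: "p 0 = 0" using hom[of 0 0] by simp
  fix x a b assume xa: "(x, a) \<in> range (\<lambda>t. (t *\<^sub>R y0, t * p y0))"
    and xb: "(x, b) \<in> range (\<lambda>t. (t *\<^sub>R y0, t * p y0))"
  obtain t where t: "x = t *\<^sub>R y0" "a = t * p y0" using xa by auto
  obtain s where s: "x = s *\<^sub>R y0" "b = s * p y0" using xb by auto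
  show "a = b"
  proof (cases "y0 = 0")
    case False hence "t = s" using t s by simp
    thus ?thesis using t s by simp
  qed (use t s p0 in simp)
next
  fix x a x' a' assume "(x, a) \<in> range (\<lambda>t. (t *\<^sub>R y0, t * p y0))" "(x', a') \<in> range (\<lambda>t. (t *\<^sub>R y0, t * p y0))"
  then obtain t s where "x = t *\<^sub>R y0" "a = t * p y0" "x' = s *\<^sub>R y0" "a' = s * p y0" by auto
  thus "(x + x', a + a') \<in> range (\<lambda>t. (t *\<^sub>R y0, t * p y0))"
    by (intro image_eqI[of _ _ "t + s"]) (simp_all add: scaleR_add_left distrib_right)
next
  fix x a c assume "(x, a) \<in> range (\<lambda>t. (t *\<^sub>R y0, t * p y0))"
  then obtain t where "x = t *\<^sub>R y0" "a = t * p y0" by auto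
  thus "(c *\<^sub>R x, c * a) \<in> range (\<lambda>t. (t *\<^sub>R y0, t * p y0))" by (intro image_eqI[of _ _ "c * t"]) simp_all
next
  fix x a assume "(x, a) \<in> range (\<lambda>t. (t *\<^sub>R y0, t * p y0))"
  then obtain t where t: "x = t *\<^sub>R y0" "a = t * p y0" by auto
  show "a \<le> p x"
  proof (cases "t \<ge> 0")
    case True thus ?thesis using t hom by simp
  next
    case False
    have "- p y0 \<le> p (- y0)" using sub[of y0 "- y0"] hom[of 0 0] by simp
    hence "(- t) * (- p y0) \<le> (- t) * p (- y0)" using False by (intro mult_left_mono) simp_all
    hence "a \<le> (- t) * p (- y0)" using t by simp
    also have "\<dots> = p x" using False t hom[of "- t" "- y0"] by simp
    finally show ?thesis .
  qed
next
  show "(y0, p y0) \<in> range (\<lambda>t. (t *\<^sub>R y0, t * p y0))" by (intro image_eqI[of _ _ 1]) simp_all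
qed

lemma dominated_graph_Union_chain:
  assumes "C \<in> chains {G. dominated_graph p y0 G}" "C \<noteq> {}"
  shows "dominated_graph p y0 (\<Union>C)"
proof -
  have good: "dominated_graph p y0 X" if "X \<in> C" for X
    using assms(1) that unfolding chains_def by blast
  have two: "\<exists>X\<in>C. u \<in> X \<and> v \<in> X" if "u \<in> \<Union>C" "v \<in> \<Union>C" for u v
    using assms(1) that unfolding chains_def chain_subset_def by blast
  show ?thesis unfolding dominated_graph_def
  proof (intro conjI allI impI)
    fix x a b assume "(x, a) \<in> \<Union>C" "(x, b) \<in> \<Union>C"
    then obtain X where "X \<in> C" "(x, a) \<in> X" "(x, b) \<in> X" using two by blast
    thus "a = b" using good unfolding dominated_graph_def by blast
  next
    fix x a x' a' assume "(x, a) \<in> \<Union>C" "(x', a') \<in> \<Union>C"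
    then obtain X where "X \<in> C" "(x, a) \<in> X" "(x', a') \<in> X" using two by blast
    thus "(x + x', a + a') \<in> \<Union>C" using good unfolding dominated_graph_def by blast
  next
    fix x a c assume "(x, a) \<in> \<Union>C"
    thus "(c *\<^sub>R x, c * a) \<in> \<Union>C" using good unfolding dominated_graph_def by blast
  next
    fix x a assume "(x, a) \<in> \<Union>C"
    thus "a \<le> p x" using good unfolding dominated_graph_def by blast
  next
    show "(y0, p y0) \<in> \<Union>C" using good assms(2) unfolding dominated_graph_def by blast
  qed
qed

lemma extension_value_dominated:
  fixes p :: "'a::real_vector \<Rightarrow> real"
  assumes hom: "\<And>c x. 0 \<le> c \<Longrightarrow> p (c *\<^sub>R x) = c * p x"
    and Msc: "\<And>x a r. (x,a) \<in> M \<Longrightarrow> (r *\<^sub>R x, r * a) \<in> M" and Mle: "\<And>x a. (x,a) \<in> M \<Longrightarrow> a \<le> p x"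
    and cup: "\<And>x a. (x, a) \<in> M \<Longrightarrow> a - p (x - z) \<le> c"
    and clow: "\<And>x a. (x, a) \<in> M \<Longrightarrow> c \<le> p (x + z) - a"
    and xa: "(x, a) \<in> M"
  shows "a + t * c \<le> p (x + t *\<^sub>R z)"
proof (cases t "0::real" rule: linorder_cases)
  case equal thus ?thesis using xa Mle by simp
next
  case greater
  have "c \<le> p ((1/t) *\<^sub>R x + z) - (1/t) * a" using clow[OF Msc[OF xa]] .
  hence "t * c \<le> t * p ((1/t) *\<^sub>R x + z) - a" using greater by (simp add: field_simps)
  also have "t * p ((1/t) *\<^sub>R x + z) = p (t *\<^sub>R ((1/t) *\<^sub>R x + z))" using greater by (simp add: hom)
  also have "t *\<^sub>R ((1/t) *\<^sub>R x + z) = x + t *\<^sub>R z" using greater by (simp add: scaleR_add_right)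
  finally show ?thesis by simp
next
  case less
  define s where "s = - t"
  have s: "s > 0" using less unfolding s_def by simp
  have "(1/s) * a - p ((1/s) *\<^sub>R x - z) \<le> c" using cup[OF Msc[OF xa]] .
  hence "a - s * p ((1/s) *\<^sub>R x - z) \<le> s * c" using s by (simp add: field_simps)
  also have "s * p ((1/s) *\<^sub>R x - z) = p (s *\<^sub>R ((1/s) *\<^sub>R x - z))" using s by (simp add: hom)
  also have "s *\<^sub>R ((1/s) *\<^sub>R x - z) = x + t *\<^sub>R z" using s unfolding s_def by (simp add: scaleR_diff_right)
  finally show ?thesis unfolding s_def by simp
qed

lemma dominated_graph_extend:
  fixes p :: "'a::real_vector \<Rightarrow> real"
  assumes sub: "\<And>x y. p (x + y) \<le> p x + p y" and hom: "\<And>c x. 0 \<le> c \<Longrightarrow> p (c *\<^sub>R x) = c * p x"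
    and M: "dominated_graph p y0 M" and nz: "\<nexists>a. (z, a) \<in> M"
  obtains M' where "dominated_graph p y0 M'" "M \<subseteq> M'" "M' \<noteq> M"
proof -
  have Mfun: "\<And>x a b. (x,a) \<in> M \<Longrightarrow> (x,b) \<in> M \<Longrightarrow> a = b"
    and Madd: "\<And>x a x' a'. (x,a) \<in> M \<Longrightarrow> (x',a') \<in> M \<Longrightarrow> (x + x', a + a') \<in> M"
    and Msc: "\<And>x a c. (x,a) \<in> M \<Longrightarrow> (c *\<^sub>R x, c * a) \<in> M"
    and Mle: "\<And>x a. (x,a) \<in> M \<Longrightarrow> a \<le> p x"
    and My0: "(y0, p y0) \<in> M"
    using M unfolding dominated_graph_def by blast+
  have M00: "(0, 0) \<in> M" using Msc[OF My0, of 0] by simp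
  define L where "L = {a - p (x - z) | x a. (x, a) \<in> M}"
  define c where "c = Sup L"
  have Lbd: "l \<le> p (x' + z) - a'" if lm: "l \<in> L" "(x', a') \<in> M" for l x' a'
  proof -
    obtain x a where xa: "l = a - p (x - z)" "(x, a) \<in> M" using lm(1) unfolding L_def by blast
    have "a + a' \<le> p ((x - z) + (x' + z))" using Mle[OF Madd[OF xa(2) lm(2)]] by simp
    also have "\<dots> \<le> p (x - z) + p (x' + z)" by (rule sub)
    finally show ?thesis using xa by simp
  qed
  have "bdd_above L" unfolding bdd_above_def using Lbd M00 by blast
  hence cup: "a - p (x - z) \<le> c" if "(x, a) \<in> M" for x a
    unfolding c_def using that by (intro cSup_upper) (auto simp: L_def)
  have clow: "c \<le> p (x' + z) - a'" if "(x', a') \<in> M" for x' a'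
    unfolding c_def using M00 Lbd that by (intro cSup_least) (auto simp: L_def)
  define M' where "M' = {(x + t *\<^sub>R z, a + t * c) | x a t. (x, a) \<in> M}"
  have "dominated_graph p y0 M'" unfolding dominated_graph_def
  proof (intro conjI allI impI)
    fix w b1 b2 assume "(w, b1) \<in> M'" "(w, b2) \<in> M'"
    then obtain x a t x' a' t' where e: "w = x + t *\<^sub>R z" "b1 = a + t * c" "(x, a) \<in> M"
      "w = x' + t' *\<^sub>R z" "b2 = a' + t' * c" "(x', a') \<in> M" unfolding M'_def by blast
    have "t = t'"
    proof (rule ccontr)
      assume tt: "t \<noteq> t'"
      have "(x' + (-1) *\<^sub>R x, a' + (-1) * a) \<in> M" using Madd[OF e(6) Msc[OF e(3)]] .
      hence "((1 / (t - t')) *\<^sub>R (x' + (-1) *\<^sub>R x), (1 / (t - t')) * (a' + (-1) * a)) \<in> M" by (rule Msc)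
      moreover have "x' - x = (t - t') *\<^sub>R z" using e(1) e(4) by (simp add: algebra_simps)
      hence "(1 / (t - t')) *\<^sub>R (x' + (-1) *\<^sub>R x) = z" using tt by simp
      ultimately show False using nz by auto
    qed
    thus "b1 = b2" using e Mfun by simp
  next
    fix w b w' b' assume "(w, b) \<in> M'" "(w', b') \<in> M'"
    then obtain x a t x' a' t' where e: "w = x + t *\<^sub>R z" "b = a + t * c" "(x, a) \<in> M"
      "w' = x' + t' *\<^sub>R z" "b' = a' + t' * c" "(x', a') \<in> M" unfolding M'_def by blast
    have "w + w' = (x + x') + (t + t') *\<^sub>R z" "b + b' = (a + a') + (t + t') * c"
      using e by (simp_all add: algebra_simps)
    thus "(w + w', b + b') \<in> M'" unfolding M'_def using Madd[OF e(3) e(6)] by blast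
  next
    fix w b r assume "(w, b) \<in> M'"
    then obtain x a t where e: "w = x + t *\<^sub>R z" "b = a + t * c" "(x, a) \<in> M" unfolding M'_def by blast
    have "r *\<^sub>R w = r *\<^sub>R x + (r * t) *\<^sub>R z" "r * b = r * a + (r * t) * c"
      using e by (simp_all add: algebra_simps)
    thus "(r *\<^sub>R w, r * b) \<in> M'" unfolding M'_def using Msc[OF e(3)] by blast
  next
    fix w b assume "(w, b) \<in> M'"
    then obtain x a t where e: "w = x + t *\<^sub>R z" "b = a + t * c" "(x, a) \<in> M" unfolding M'_def by blast
    show "b \<le> p w" unfolding e using extension_value_dominated[OF hom Msc Mle cup clow e(3)] .
  next
    show "(y0, p y0) \<in> M'" unfolding M'_def using My0 by force
  qed
  moreover have "M \<subseteq> M'" unfolding M'_def by force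
  moreover have "(z, c) \<in> M'" unfolding M'_def using M00 by force
  hence "M' \<noteq> M" using nz by blast
  ultimately show ?thesis by (rule that)
qed

lemma hahn_banach_sublinear:
  fixes p :: "'a::real_vector \<Rightarrow> real"
  assumes sub: "\<And>x y. p (x + y) \<le> p x + p y" and hom: "\<And>c x. 0 \<le> c \<Longrightarrow> p (c *\<^sub>R x) = c * p x"
  obtains \<phi> where "linear \<phi>" "\<And>x. \<phi> x \<le> p x" "\<phi> y0 = p y0"
proof -
  have "\<exists>M\<in>{G. dominated_graph p y0 G}. \<forall>X\<in>{G. dominated_graph p y0 G}. M \<subseteq> X \<longrightarrow> X = M"
  proof (rule Zorn_Lemma2, rule ballI)
    fix C assume "C \<in> chains {G. dominated_graph p y0 G}"
    thus "\<exists>U\<in>{G. dominated_graph p y0 G}. \<forall>X\<in>C. X \<subseteq> U"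
      using dominated_graph_line[OF sub hom] dominated_graph_Union_chain
      by (cases "C = {}") blast+
  qed
  then obtain M where M: "dominated_graph p y0 M"
    and max: "\<And>X. dominated_graph p y0 X \<Longrightarrow> M \<subseteq> X \<Longrightarrow> X = M" by blast
  have Mfun: "\<And>x a b. (x,a) \<in> M \<Longrightarrow> (x,b) \<in> M \<Longrightarrow> a = b"
    and Madd: "\<And>x a x' a'. (x,a) \<in> M \<Longrightarrow> (x',a') \<in> M \<Longrightarrow> (x + x', a + a') \<in> M"
    and Msc: "\<And>x a c. (x,a) \<in> M \<Longrightarrow> (c *\<^sub>R x, c * a) \<in> M"
    and Mle: "\<And>x a. (x,a) \<in> M \<Longrightarrow> a \<le> p x"
    and My0: "(y0, p y0) \<in> M"
    using M unfolding dominated_graph_def by blast+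
  have total: "\<exists>a. (z, a) \<in> M" for z
    using dominated_graph_extend[OF sub hom M] max by metis
  define \<phi> where "\<phi> z = (THE a. (z, a) \<in> M)" for z
  have phiM: "(z, \<phi> z) \<in> M" for z
    unfolding \<phi>_def using total[of z] Mfun by (metis (mono_tags, lifting) theI)
  have phi_eq: "\<phi> z = a" if "(z, a) \<in> M" for z a using Mfun[OF phiM that] .
  have "linear \<phi>"
  proof (rule linearI)
    show "\<phi> (x + y) = \<phi> x + \<phi> y" for x y by (rule phi_eq[OF Madd[OF phiM phiM]])
    show "\<phi> (r *\<^sub>R x) = r *\<^sub>R \<phi> x" for r x using phi_eq[OF Msc[OF phiM]] by simp
  qed
  moreover have "\<phi> x \<le> p x" for x using Mle[OF phiM] .
  moreover have "\<phi> y0 = p y0" by (rule phi_eq[OF My0])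
  ultimately show ?thesis by (rule that)
qed

section \<open>The aw-topology is finer\<close>

lemma positive_norming_functional: fixes y :: "'a::banach_lattice"
  assumes y0: "0 \<le> y"
  obtains \<phi> where "\<phi> \<in> pos_dual" "\<phi> y = norm y" "\<And>x. \<phi> x \<le> norm x"
proof -
  let ?p = "\<lambda>x::'a. norm (sup x 0)"
  have sub: "?p (x + z) \<le> ?p x + ?p z" for x z
  proof -
    have "sup (x + z) 0 \<le> sup x 0 + sup z 0" by (intro le_supI add_mono add_nonneg_nonneg) simp_all
    thus ?thesis by (intro norm_le_add_of_le_add) simp_all
  qed
  have hom: "?p (c *\<^sub>R x) = c * ?p x" if "0 \<le> c" for c x
    using scaleR_sup_zero[OF that, of x, symmetric] that by simp
  obtain \<phi> where lin: "linear \<phi>" and le: "\<And>x. \<phi> x \<le> ?p x" and eq: "\<phi> y = ?p y"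
    using hahn_banach_sublinear[of ?p, OF sub hom] by blast
  have le2: "\<phi> x \<le> norm x" for x using le[of x] norm_sup_zero_le[of x] by simp
  have "bounded_linear \<phi>"
  proof (rule bounded_linear_intro[where K=1])
    show "\<phi> (x + z) = \<phi> x + \<phi> z" for x z by (rule linear_add[OF lin])
    show "\<phi> (r *\<^sub>R x) = r *\<^sub>R \<phi> x" for r x by (rule linear_cmul[OF lin])
    show "norm (\<phi> x) \<le> norm x * 1" for x using le2[of x] le2[of "- x"] linear_neg[OF lin, of x] by simp
  qed
  moreover have "0 \<le> \<phi> x" if "0 \<le> x" for x
    using le[of "- x"] that linear_neg[OF lin, of x] by (simp add: sup_absorb2)
  ultimately have "\<phi> \<in> pos_dual" unfolding pos_dual_def by blast
  moreover have "\<phi> y = norm y" using eq y0 by (simp add: sup_absorb1)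
  ultimately show ?thesis using le2 by (rule that)
qed

primrec partial_sup :: "(nat \<Rightarrow> 'a::lattice) \<Rightarrow> nat \<Rightarrow> nat \<Rightarrow> 'a" where
  "partial_sup g n 0 = g n"
| "partial_sup g n (Suc m) = sup (partial_sup g n m) (g (n + Suc m))"

lemma partial_sup_ge: "n \<le> k \<Longrightarrow> k \<le> n + m \<Longrightarrow> g k \<le> partial_sup g n m"
proof (induction m)
  case (Suc m)
  thus ?case by (cases "k = n + Suc m") (simp_all add: le_supI1)
qed simp

lemma partial_sup_le: "(\<And>k. n \<le> k \<Longrightarrow> k \<le> n + m \<Longrightarrow> g k \<le> z) \<Longrightarrow> partial_sup g n m \<le> z"
  by (induction m) simp_all

lemma partial_sup_nonneg: fixes g :: "nat \<Rightarrow> 'a::banach_lattice"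
  shows "(\<And>k. 0 \<le> g k) \<Longrightarrow> 0 \<le> partial_sup g n m"
  by (induction m) (simp_all add: le_supI1)

lemma pos_dual_partial_sup_le: fixes g :: "nat \<Rightarrow> 'a::banach_lattice"
  assumes nu: "\<nu> \<in> pos_dual" and g0: "\<And>k. 0 \<le> g k"
  shows "\<nu> (partial_sup g n m) \<le> (\<Sum>k\<in>{n..n+m}. \<nu> (g k))"
proof (induction m)
  case (Suc m)
  have "\<nu> (partial_sup g n (Suc m)) \<le> \<nu> (partial_sup g n m) + \<nu> (g (n + Suc m))"
    using nu partial_sup_nonneg[OF g0] g0 by (simp add: pos_dual_sup_le)
  also have "\<dots> \<le> (\<Sum>k\<in>{n..n + Suc m}. \<nu> (g k))" using Suc by simp
  finally show ?case .
qed simp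

text \<open>The supremum of the tail \<open>g\<^sub>n, g\<^sub>n\<^sub>+\<^sub>1, \<dots>\<close>, as the norm limit of the partial suprema;
  it exists when \<open>g\<close> is order bounded and the sequential property holds.\<close>

definition tail_sup :: "(nat \<Rightarrow> 'a::banach_lattice) \<Rightarrow> nat \<Rightarrow> 'a" where
  "tail_sup g n = lim (partial_sup g n)"

context
  fixes g :: "nat \<Rightarrow> 'a::banach_lattice" and h :: 'a
  assumes D: "disjoint_order_bounded_null TYPE('a)" and g0: "\<And>k. 0 \<le> g k" and gh: "\<And>k. g k \<le> h"
begin

lemma partial_sup_LIMSEQ_tail_sup: "partial_sup g n \<longlonglongrightarrow> tail_sup g n"
proof -
  have "convergent (partial_sup g n)"
  proof (rule incseq_order_bounded_convergent[OF D, of _ h])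
    show "partial_sup g n m \<le> partial_sup g n (Suc m)" for m by simp
    show "0 \<le> partial_sup g n m" for m by (rule partial_sup_nonneg[OF g0])
    show "partial_sup g n m \<le> h" for m by (rule partial_sup_le) (rule gh)
  qed
  thus ?thesis unfolding tail_sup_def by (simp add: convergent_LIMSEQ_iff)
qed

lemma le_tail_sup:
  assumes "n \<le> k" shows "g k \<le> tail_sup g n"
proof (rule LIMSEQ_ge_of_eventually_ge[OF partial_sup_LIMSEQ_tail_sup])
  show "eventually (\<lambda>m. g k \<le> partial_sup g n m) sequentially"
    unfolding eventually_sequentially using assms by (intro exI[of _ k] allI impI partial_sup_ge) simp_all
qed

lemma tail_sup_nonneg: "0 \<le> tail_sup g n"
  using partial_sup_LIMSEQ_tail_sup by (rule LIMSEQ_ge_of_eventually_ge) (simp add: partial_sup_nonneg[OF g0])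

lemma tail_sup_le: "tail_sup g n \<le> h"
  using partial_sup_LIMSEQ_tail_sup by (rule LIMSEQ_le_of_eventually_le) (simp add: partial_sup_le[OF gh])

lemma tail_sup_Suc_le: "tail_sup g (Suc n) \<le> tail_sup g n"
proof (rule LIMSEQ_le_LIMSEQ[OF partial_sup_LIMSEQ_tail_sup LIMSEQ_Suc[OF partial_sup_LIMSEQ_tail_sup]])
  show "partial_sup g (Suc n) m \<le> partial_sup g n (Suc m)" for m
    by (rule partial_sup_le) (intro partial_sup_ge, simp_all)
qed

lemma pos_dual_tail_sup_le:
  assumes nu: "\<nu> \<in> pos_dual" and B: "\<And>m. (\<Sum>k\<in>{n..n+m}. \<nu> (g k)) \<le> B"
  shows "\<nu> (tail_sup g n) \<le> B"
proof (rule LIMSEQ_le_const2)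
  show "(\<lambda>m. \<nu> (partial_sup g n m)) \<longlonglongrightarrow> \<nu> (tail_sup g n)"
    using bounded_linear.tendsto[OF pos_dual_bounded_linear[OF nu] partial_sup_LIMSEQ_tail_sup] .
  show "\<exists>N. \<forall>m\<ge>N. \<nu> (partial_sup g n m) \<le> B"
  proof (intro exI[of _ 0] allI impI)
    fix m :: nat
    show "\<nu> (partial_sup g n m) \<le> B" using pos_dual_partial_sup_le[OF nu g0, where n = n and m = m] B[of m] by (rule order_trans)
  qed
qed

end

text \<open>With \<open>s\<^sub>l\<close> the supremum of the terms after \<open>Y\<^sub>l\<close>, which \<open>\<Phi>\<^sub>l\<close> annihilates, the elements
  \<open>(Y\<^sub>l - c s\<^sub>l - \<eta> h)\<^sup>+\<close> are disjoint, yet \<open>\<Phi>\<^sub>l\<close> keeps them at norm at least \<open>\<epsilon>/2\<close>.\<close>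

lemma annihilated_norming_sequence_impossible: fixes Y :: "nat \<Rightarrow> 'a::banach_lattice"
  assumes D: "disjoint_order_bounded_null TYPE('a)" and e: "\<epsilon> > 0"
    and Y0: "\<And>k. 0 \<le> Y k" and Yh: "\<And>k. Y k \<le> h" and Yn: "\<And>k. \<epsilon> \<le> norm (Y k)"
    and Phi: "\<And>l. \<Phi> l \<in> pos_dual" and PhiY: "\<And>l. \<Phi> l (Y l) = norm (Y l)"
    and Phile: "\<And>l x. \<Phi> l x \<le> norm x" and Phizero: "\<And>l k. l < k \<Longrightarrow> \<Phi> l (Y k) = 0"
  shows False
proof -
  have h0: "0 \<le> h" using Y0[of 0] Yh[of 0] by (rule order_trans)
  define s where "s l = tail_sup Y (Suc l)" for l
  have sge: "Y k \<le> s l" if "Suc l \<le> k" for l k unfolding s_def using le_tail_sup[OF D Y0 Yh that] .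
  have s0: "0 \<le> s l" for l unfolding s_def by (rule tail_sup_nonneg[OF D Y0 Yh])
  have Phis: "\<Phi> l (s l) = 0" for l
  proof (rule antisym)
    show "\<Phi> l (s l) \<le> 0" unfolding s_def
      by (rule pos_dual_tail_sup_le[OF D Y0 Yh Phi]) (simp add: Phizero)
  qed (rule pos_dual_nonneg[OF Phi s0])
  have nh: "\<epsilon> \<le> norm h" using Yn[of 0] norm_mono_nonneg[OF Y0 Yh, of 0] by simp
  hence nh0: "norm h > 0" using e by linarith
  define \<eta> where "\<eta> = \<epsilon> / (2 * norm h)"
  define c where "c = 1 / \<eta>"
  have eta0: "0 < \<eta>" and etah: "\<eta> * norm h = \<epsilon> / 2" and ce: "c * \<eta> = 1" and c1: "1 \<le> c"
    unfolding c_def \<eta>_def using e nh nh0 by (simp_all add: field_simps)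
  define p where "p l = sup (Y l - c *\<^sub>R s l - \<eta> *\<^sub>R h) 0" for l
  have etah0: "0 \<le> \<eta> *\<^sub>R h" and cs0: "0 \<le> c *\<^sub>R s l" for l
    using h0 eta0 s0 c1 by (simp_all add: scaleR_nonneg_nonneg)
  have ph: "p l \<le> h" for l
  proof -
    have "Y l - (c *\<^sub>R s l + \<eta> *\<^sub>R h) \<le> Y l" using add_nonneg_nonneg[OF cs0[of l] etah0] by (simp only: diff_le_eq le_add_same_cancel1)
    also have "\<dots> \<le> h" by (rule Yh)
    finally show ?thesis unfolding p_def using h0 by (simp add: diff_diff_eq)
  qed
  have pdj: "inf (p i) (p j) = 0" if "i < j" for i j
  proof -
    have "c *\<^sub>R Y j \<le> c *\<^sub>R s i" using sge[of i j] that c1 by (intro scaleR_left_mono) simp_all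
    hence "c *\<^sub>R Y j \<le> c *\<^sub>R s i + \<eta> *\<^sub>R h" by (rule add_increasing2[OF etah0])
    hence "Y i - (c *\<^sub>R s i + \<eta> *\<^sub>R h) \<le> Y i - c *\<^sub>R Y j" by (rule diff_left_mono)
    hence "Y i - c *\<^sub>R s i - \<eta> *\<^sub>R h \<le> Y i - c *\<^sub>R Y j" by (simp only: diff_diff_eq)
    hence "p i \<le> sup (Y i - c *\<^sub>R Y j) 0" unfolding p_def by (rule sup_mono) simp
    moreover have "Y j - c *\<^sub>R s j - \<eta> *\<^sub>R h \<le> Y j - \<eta> *\<^sub>R h" using cs0[of j] by (simp add: algebra_simps)
    hence "p j \<le> sup (Y j - \<eta> *\<^sub>R h) 0" unfolding p_def by (rule sup_mono) simp
    ultimately have "inf (p i) (p j) \<le> inf (sup (Y i - c *\<^sub>R Y j) 0) (sup (Y j - \<eta> *\<^sub>R h) 0)" by (rule inf_mono)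
    also have "\<dots> = 0" by (rule inf_excess_eq_zero[OF h0 Yh c1]) (simp add: ce)
    finally show ?thesis unfolding p_def by (intro antisym) simp_all
  qed
  have "p \<longlonglongrightarrow> 0"
  proof (rule disjoint_order_bounded_nullD'[OF D])
    show "0 \<le> p n" for n unfolding p_def by simp
  qed (fact ph, fact pdj)
  hence "eventually (\<lambda>l. norm (p l) < \<epsilon> / 2) sequentially"
    by (rule LIMSEQ_0_eventually_norm_less) (use e in simp)
  then obtain l where l: "norm (p l) < \<epsilon> / 2" unfolding eventually_sequentially by blast
  have "\<eta> * \<Phi> l h \<le> \<eta> * norm h" using Phile[of l h] eta0 by (intro mult_left_mono) simp_all
  hence "\<epsilon> / 2 \<le> norm (Y l) - \<eta> * \<Phi> l h" using Yn[of l] etah by linarith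
  also have "\<dots> = \<Phi> l (Y l - c *\<^sub>R s l - \<eta> *\<^sub>R h)"
    using PhiY Phis by (simp add: linear_diff[OF pos_dual_linear[OF Phi]] linear_cmul[OF pos_dual_linear[OF Phi]])
  finally have "\<epsilon> / 2 \<le> \<Phi> l (Y l - c *\<^sub>R s l - \<eta> *\<^sub>R h)" .
  also have "\<dots> \<le> \<Phi> l (p l)" unfolding p_def by (rule pos_dual_mono[OF Phi]) simp
  also have "\<dots> \<le> norm (p l)" by (rule Phile)
  finally show False using l by simp
qed

text \<open>Otherwise each counterexample for the sum of the norming functionals of the previous ones
  extends a sequence as in \<open>annihilated_norming_sequence_impossible\<close>.\<close>

lemma almost_strictly_positive_functional: fixes h :: "'a::banach_lattice"
  assumes D: "disjoint_order_bounded_null TYPE('a)" and e: "\<epsilon> > 0"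
  shows "\<exists>\<nu>\<in>pos_dual. \<forall>y. 0 \<le> y \<longrightarrow> y \<le> h \<longrightarrow> \<nu> y = 0 \<longrightarrow> norm y < \<epsilon>"
proof (rule ccontr)
  assume "\<not> ?thesis"
  hence H: "\<exists>y. 0 \<le> y \<and> y \<le> h \<and> \<nu> y = 0 \<and> \<epsilon> \<le> norm y" if "\<nu> \<in> pos_dual" for \<nu>
    using that by (meson not_less)
  define P where "P = (\<lambda>(j::nat) (y :: 'a, \<phi> :: 'a \<Rightarrow> real, \<Psi> :: 'a \<Rightarrow> real).
      0 \<le> y \<and> y \<le> h \<and> \<epsilon> \<le> norm y \<and> \<phi> \<in> pos_dual \<and> \<phi> y = norm y \<and> (\<forall>x. \<phi> x \<le> norm x)
      \<and> \<Psi> \<in> pos_dual \<and> (\<forall>x. 0 \<le> x \<longrightarrow> \<phi> x \<le> \<Psi> x))"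
  define Q where "Q = (\<lambda>(j::nat) (y :: 'a, \<phi> :: 'a \<Rightarrow> real, \<Psi> :: 'a \<Rightarrow> real) (y', \<phi>', \<Psi>').
      \<Psi> y' = 0 \<and> \<Psi>' = (\<lambda>x. \<Psi> x + \<phi>' x))"
  have "\<exists>f. \<forall>j. P j (f j) \<and> Q j (f j) (f (Suc j))"
  proof (rule dependent_nat_choice)
    obtain y where y: "0 \<le> y" "y \<le> h" "\<epsilon> \<le> norm y" using H[OF pos_dual_zero] by blast
    obtain \<phi> where \<phi>: "\<phi> \<in> pos_dual" "\<phi> y = norm y" "\<And>x. \<phi> x \<le> norm x"
      using positive_norming_functional[OF y(1)] by blast
    show "\<exists>x. P 0 x" unfolding P_def using y \<phi> by (intro exI[of _ "(y, \<phi>, \<phi>)"]) simp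
  next
    fix st j assume Pj: "P j st"
    obtain y \<phi> \<Psi> where st: "st = (y, \<phi>, \<Psi>)" by (cases st) blast
    have Psi: "\<Psi> \<in> pos_dual" using Pj unfolding P_def st by simp
    obtain y' where y': "0 \<le> y'" "y' \<le> h" "\<Psi> y' = 0" "\<epsilon> \<le> norm y'" using H[OF Psi] by blast
    obtain \<phi>' where \<phi>': "\<phi>' \<in> pos_dual" "\<phi>' y' = norm y'" "\<And>x. \<phi>' x \<le> norm x"
      using positive_norming_functional[OF y'(1)] by blast
    have "P (Suc j) (y', \<phi>', \<lambda>x. \<Psi> x + \<phi>' x)" unfolding P_def
      using y' \<phi>' pos_dual_add[OF Psi \<phi>'(1)] pos_dual_nonneg[OF Psi] by simp
    moreover have "Q j st (y', \<phi>', \<lambda>x. \<Psi> x + \<phi>' x)" unfolding Q_def st using y' by simp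
    ultimately show "\<exists>y. P (Suc j) y \<and> Q j st y" by blast
  qed
  then obtain f where fP: "\<And>j. P j (f j)" and fQ: "\<And>j. Q j (f j) (f (Suc j))" by blast
  define Y where "Y k = fst (f k)" for k
  define \<Phi> where "\<Phi> k = fst (snd (f k))" for k
  define \<Psi> where "\<Psi> k = snd (snd (f k))" for k
  have Y0: "0 \<le> Y k" and Yh: "Y k \<le> h" and Yn: "\<epsilon> \<le> norm (Y k)" and Phi: "\<Phi> k \<in> pos_dual"
    and PhiY: "\<Phi> k (Y k) = norm (Y k)" and Phile: "\<And>x. \<Phi> k x \<le> norm x"
    and PhiPsi: "\<And>x. 0 \<le> x \<Longrightarrow> \<Phi> k x \<le> \<Psi> k x" for k
    using fP[of k] unfolding P_def Y_def \<Phi>_def \<Psi>_def by (simp_all add: case_prod_beta)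
  have PsiY: "\<Psi> k (Y (Suc k)) = 0" and PsiS: "\<Psi> (Suc k) = (\<lambda>x. \<Psi> k x + \<Phi> (Suc k) x)" for k
    using fQ[of k] unfolding Q_def Y_def \<Phi>_def \<Psi>_def by (simp_all add: case_prod_beta)
  have Psimono: "\<Psi> i x \<le> \<Psi> j x" if "0 \<le> x" "i \<le> j" for x i j
  proof -
    have "\<Psi> k x \<le> \<Psi> (Suc k) x" for k using pos_dual_nonneg[OF Phi that(1)] unfolding PsiS by simp
    thus ?thesis using lift_Suc_mono_le[of "\<lambda>k. \<Psi> k x", OF _ that(2)] by blast
  qed
  have "\<Phi> l (Y k) = 0" if lk: "l < k" for l k
  proof -
    obtain k' where k': "k = Suc k'" "l \<le> k'" using lk by (cases k) auto
    have "\<Phi> l (Y k) \<le> \<Psi> k' (Y k)" using PhiPsi[OF Y0] Psimono[OF Y0 k'(2)] by (rule order_trans)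
    also have "\<dots> = 0" unfolding k'(1) by (rule PsiY)
    finally show ?thesis using pos_dual_nonneg[OF Phi Y0] by (intro antisym) simp_all
  qed
  thus False
    using annihilated_norming_sequence_impossible[OF D e Y0 Yh Yn Phi PhiY Phile] by blast
qed

lemma sum_half_powers_le: "(\<Sum>k\<in>{n..n+m}. (1/2::real)^k) \<le> 2 * (1/2)^n"
proof -
  have "(\<Sum>k\<in>{n..n+m}. (1/2::real)^k) \<le> 2 * (1/2)^n - (1/2)^(n+m)"
    by (induction m) simp_all
  moreover have "0 \<le> (1/2::real)^(n+m)" by simp
  ultimately show ?thesis by linarith
qed

text \<open>Otherwise there are \<open>f\<^sub>n\<close> outside the un-ball with \<open>\<nu>|f\<^sub>n| < 2\<^sup>-\<^sup>n\<close>; the tail suprema of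
  \<open>|f\<^sub>n| \<sqinter> h\<close> then decrease to an element of \<open>[0,h]\<close> that \<open>\<nu>\<close> annihilates but whose norm is at
  least \<open>\<epsilon>\<close>.\<close>

lemma pos_dual_controls_un_ball: fixes h :: "'a::banach_lattice"
  assumes D: "disjoint_order_bounded_null TYPE('a)" and h0: "0 \<le> h" and nu: "\<nu> \<in> pos_dual"
    and Z: "\<And>y. 0 \<le> y \<Longrightarrow> y \<le> h \<Longrightarrow> \<nu> y = 0 \<Longrightarrow> norm y < \<epsilon>"
  shows "\<exists>\<delta>>0. \<forall>f. \<nu> \<bar>f\<bar> < \<delta> \<longrightarrow> norm (inf \<bar>f\<bar> h) < \<epsilon>"
proof (rule ccontr)
  assume "\<not> ?thesis"
  hence "\<exists>f. \<nu> \<bar>f\<bar> < (1/2)^n \<and> \<epsilon> \<le> norm (inf \<bar>f\<bar> h)" for n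
    by (metis not_less zero_less_divide_1_iff zero_less_numeral zero_less_power)
  then obtain F where F: "\<And>n. \<nu> \<bar>F n\<bar> < (1/2)^n" "\<And>n. \<epsilon> \<le> norm (inf \<bar>F n\<bar> h)" by metis
  define g where "g n = inf \<bar>F n\<bar> h" for n
  have g0: "0 \<le> g k" and gh: "g k \<le> h" for k unfolding g_def using h0 by simp_all
  define T where "T n = tail_sup g n" for n
  have T0: "0 \<le> T n" and Th: "T n \<le> h" and gT: "g n \<le> T n" for n
    unfolding T_def using tail_sup_nonneg[OF D, where g = g and h = h] tail_sup_le[OF D, where g = g and h = h]
      le_tail_sup[OF D, where g = g and h = h] g0 gh by simp_all
  have Tnu: "\<nu> (T n) \<le> 2 * (1/2)^n" for n unfolding T_def
  proof (rule pos_dual_tail_sup_le[OF D g0 gh nu])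
    fix m
    have "\<nu> (g k) \<le> (1/2)^k" for k
      using pos_dual_mono[OF nu, of "g k" "\<bar>F k\<bar>"] F(1)[of k] unfolding g_def by simp
    hence "(\<Sum>k\<in>{n..n+m}. \<nu> (g k)) \<le> (\<Sum>k\<in>{n..n+m}. (1/2::real)^k)" by (rule sum_mono)
    also have "\<dots> \<le> 2 * (1/2)^n" by (rule sum_half_powers_le)
    finally show "(\<Sum>k\<in>{n..n+m}. \<nu> (g k)) \<le> 2 * (1/2)^n" .
  qed
  have "convergent T"
    using D tail_sup_Suc_le[OF D g0 gh] T0 unfolding T_def by (rule decseq_nonneg_convergent)
  then obtain t where t: "T \<longlonglongrightarrow> t" unfolding convergent_def by blast
  have t0: "0 \<le> t" using t by (rule LIMSEQ_ge_of_eventually_ge) (simp add: T0)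
  have th: "t \<le> h" using t by (rule LIMSEQ_le_of_eventually_le) (simp add: Th)
  have "(\<lambda>n. \<nu> (T n)) \<longlonglongrightarrow> \<nu> t" using bounded_linear.tendsto[OF pos_dual_bounded_linear[OF nu] t] .
  moreover have "(\<lambda>n. \<nu> (T n)) \<longlonglongrightarrow> 0"
  proof (rule Lim_null_comparison)
    show "eventually (\<lambda>n. norm (\<nu> (T n)) \<le> 2 * (1/2::real)^n) sequentially"
      using Tnu pos_dual_nonneg[OF nu T0] by (intro always_eventually allI) simp
    show "(\<lambda>n. 2 * (1/2::real)^n) \<longlonglongrightarrow> 0" by (intro tendsto_mult_right_zero LIMSEQ_power_zero) simp
  qed
  ultimately have "\<nu> t = 0" by (rule LIMSEQ_unique)
  moreover have "\<epsilon> \<le> norm t"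
  proof (rule LIMSEQ_le_const[OF tendsto_norm[OF t]])
    show "\<exists>N. \<forall>n\<ge>N. \<epsilon> \<le> norm (T n)"
      using F(2) norm_mono_nonneg[OF g0 gT] unfolding g_def by (blast intro: order_trans)
  qed
  ultimately show False using Z[OF t0 th] by simp
qed

lemma aw_finer_if_disjoint_null: fixes U :: "'a::banach_lattice set"
  assumes D: "disjoint_order_bounded_null TYPE('a)" and U: "openin un_topology U"
  shows "openin aw_topology U"
  unfolding openin_aw_topology aw_open_def
proof
  fix x assume "x \<in> U"
  then obtain h \<epsilon> where h0: "0 \<le> h" and e: "\<epsilon> > 0" and sub: "{y. norm (inf \<bar>y - x\<bar> h) < \<epsilon>} \<subseteq> U"
    using U unfolding openin_un_topology un_open_def by blast
  obtain \<nu> where nu: "\<nu> \<in> pos_dual" and "\<And>y. 0 \<le> y \<Longrightarrow> y \<le> h \<Longrightarrow> \<nu> y = 0 \<Longrightarrow> norm y < \<epsilon>"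
    using almost_strictly_positive_functional[OF D e] by blast
  then obtain \<delta> where "\<delta> > 0" "\<And>f. \<nu> \<bar>f\<bar> < \<delta> \<Longrightarrow> norm (inf \<bar>f\<bar> h) < \<epsilon>"
    using pos_dual_controls_un_ball[OF D h0 nu] by meson
  moreover from this(2) have "{y. \<nu> \<bar>y - x\<bar> < \<delta>} \<subseteq> U" using sub by blast
  ultimately show "\<exists>\<nu> \<epsilon>. \<nu> \<in> pos_dual \<and> \<epsilon> > 0 \<and> {y. \<nu> \<bar>y - x\<bar> < \<epsilon>} \<subseteq> U" using nu by blast
qed

theorem mainTheorem7:
  shows "(order_continuous TYPE('a::banach_lattice) \<longleftrightarrow>
            (\<forall>U. openin (un_topology :: 'a topology) U \<longrightarrow> openin (aw_topology :: 'a topology) U))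
       \<and> (order_continuous TYPE('a) \<longleftrightarrow> boundedly_exhaustive (un_topology :: 'a topology))
       \<and> (order_continuous TYPE('a) \<longleftrightarrow> uniformly_exhaustive (un_topology :: 'a topology))"
proof -
  have OC: "order_continuous TYPE('a) \<longleftrightarrow> disjoint_order_bounded_null TYPE('a)"
    using disjoint_null_if_order_continuous order_continuous_if_disjoint_null by blast
  have BE: "boundedly_exhaustive (un_topology :: 'a topology) \<longleftrightarrow> disjoint_order_bounded_null TYPE('a)"
    using boundedly_exhaustive_if_disjoint_null disjoint_null_if_boundedly_exhaustive by blast
  have "disjoint_order_bounded_null TYPE('a) \<Longrightarrow>
      (\<forall>U. openin (un_topology :: 'a topology) U \<longrightarrow> openin (aw_topology :: 'a topology) U)"
    using aw_finer_if_disjoint_null by blast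
  moreover note uniformly_exhaustive_if_aw_finer[where 'a = 'a]
    boundedly_exhaustive_if_uniformly_exhaustive[where 'a = 'a]
  ultimately show ?thesis using OC BE by blast
qed

end
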